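(* Let $\pi$ be an $r$-homogeneous strongly log-concave distribution and $\mathcal{M}$ its associated matroid, and let $P^{\vee}_k$ and $P^{\wedge}_k$ be the down-up and up-down walks on $\mathcal{M}(k)$. Then: (1) for every $2\le k\le r$, $\rho(P^{\vee}_k)\ge \frac1k$; (2) for every $1\le k\le r-1$, $\rho(P^{\wedge}_k)\ge\frac{1}{k+1}$.
   Context: $\pi:2^{[n]}\to\mathbb{R}_{\ge0}$ has generating polynomial $g_\pi(x)=\sum_S\pi(S)\prod_{i\in S}x_i$; it is $r$-homogeneous if its support consists of $r$-sets; a polynomial with nonnegative coefficients is strongly log-concave if for every $J\subseteq[n]$, $\nabla^2\log(\partial_J p)$ is negative semidefinite at the all-ones vector; $\pi$ is strongly log-concave if $g_\pi$ is. The support $\mathcal{B}$ of such $\pi$ is the set of bases of a rank-$r$ matroid $\mathcal{M}=(E,\mathcal{I})$; $\mathcal{M}(k)$ denotes the independent sets of size $k$. Weights: $w(I)=(r-|I|)!\sum_{B\in\mathcal{B},B\supseteq I}\pi(B)$ for $I\in\mathcal{I}$ (up to a common positive constant), $w(I)=0$ otherwise; $\pi_k(I)\propto w(I)$ on $\mathcal{M}(k)$. Up-down walk, for $I,J\in\mathcal{M}(k)$: $P^{\wedge}_k(I,I)=\frac1{k+1}$; $P^{\wedge}_k(I,J)=\frac{w(I\cup J)}{(k+1)w(I)}$ if $I\cup J\in\mathcal{M}(k+1)$; $0$ otherwise. Down-up walk: $P^{\vee}_k(I,I)=\sum_{I'\in\mathcal{M}(k-1),I'\subset I}\frac{w(I)}{k\,w(I')}$;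 $P^{\vee}_k(I,J)=\frac{w(J)}{k\,w(I\cap J)}$ if $|I\cap J|=k-1$; $0$ if $|I\cap J|<k-1$. Both are reversible with stationary distribution $\pi_k$. For a reversible chain $P$ with stationary $\mu$ on finite $\Omega$: $\mathcal{E}_P(f,g)=\sum_{x,y}\mu(x)f(x)[I-P](x,y)g(y)$, $\mathrm{Ent}_\mu(f)=\mathbb{E}_\mu(f\log f)-\mathbb{E}_\mu f\log\mathbb{E}_\mu f$ for $f\ge0$ (with $0\log0=0$), and $\rho(P)=\inf\{\mathcal{E}_P(f,\log f)/\mathrm{Ent}_\mu(f): f:\Omega\to\mathbb{R}_{\ge0},\ \mathrm{Ent}_\mu(f)\neq0\}$. *)

theory Defs
  imports "HOL-Analysis.Analysis" "HOL-Library.Extended_Real"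
begin

text \<open>Ground set [n] is rendered as {..<n}; vectors in R^n as functions nat => real.\<close>

definition gen_poly :: "nat \<Rightarrow> (nat set \<Rightarrow> real) \<Rightarrow> (nat \<Rightarrow> real) \<Rightarrow> real" where
  "gen_poly n \<pi> x = (\<Sum>S\<in>Pow {..<n}. \<pi> S * (\<Prod>i\<in>S. x i))"

definition partial :: "nat \<Rightarrow> ((nat \<Rightarrow> real) \<Rightarrow> real) \<Rightarrow> (nat \<Rightarrow> real) \<Rightarrow> real" where
  "partial i f = (\<lambda>x. deriv (\<lambda>t. f (x(i := t))) (x i))"

definition partial_set :: "nat set \<Rightarrow> ((nat \<Rightarrow> real) \<Rightarrow> real) \<Rightarrow> (nat \<Rightarrow> real) \<Rightarrow> real" where
  "partial_set J f = foldr partial (sorted_list_of_set J) f"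

definition hessian_nsd :: "nat \<Rightarrow> ((nat \<Rightarrow> real) \<Rightarrow> real) \<Rightarrow> (nat \<Rightarrow> real) \<Rightarrow> bool" where
  "hessian_nsd n h x \<longleftrightarrow>
     (\<forall>v::nat \<Rightarrow> real. (\<Sum>i<n. \<Sum>j<n. v i * partial i (partial j h) x * v j) \<le> 0)"

definition strongly_log_concave_poly :: "nat \<Rightarrow> ((nat \<Rightarrow> real) \<Rightarrow> real) \<Rightarrow> bool" where
  "strongly_log_concave_poly n p \<longleftrightarrow>
     (\<forall>J. J \<subseteq> {..<n} \<longrightarrow> hessian_nsd n (\<lambda>x. ln (partial_set J p x)) (\<lambda>_. 1))"

definition r_homogeneous :: "nat \<Rightarrow> nat \<Rightarrow> (nat set \<Rightarrow> real) \<Rightarrow> bool" where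
  "r_homogeneous n r \<pi> \<longleftrightarrow> (\<forall>S. \<pi> S \<noteq> 0 \<longrightarrow> S \<subseteq> {..<n} \<and> card S = r)"

definition distribution :: "nat \<Rightarrow> (nat set \<Rightarrow> real) \<Rightarrow> bool" where
  "distribution n \<pi> \<longleftrightarrow> (\<forall>S. \<pi> S \<ge> 0) \<and> (\<forall>S. \<not> S \<subseteq> {..<n} \<longrightarrow> \<pi> S = 0)
      \<and> (\<Sum>S\<in>Pow {..<n}. \<pi> S) = 1"

definition bases :: "nat \<Rightarrow> (nat set \<Rightarrow> real) \<Rightarrow> nat set set" where
  "bases n \<pi> = {B. B \<subseteq> {..<n} \<and> \<pi> B \<noteq> 0}"

definition indep_k :: "nat \<Rightarrow> (nat set \<Rightarrow> real) \<Rightarrow> nat \<Rightarrow> nat set set" where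
  "indep_k n \<pi> k = {I. \<exists>B\<in>bases n \<pi>. I \<subseteq> B \<and> card I = k}"

definition weight :: "nat \<Rightarrow> nat \<Rightarrow> (nat set \<Rightarrow> real) \<Rightarrow> nat set \<Rightarrow> real" where
  "weight n r \<pi> I =
     (if \<exists>B\<in>bases n \<pi>. I \<subseteq> B
      then fact (r - card I) * (\<Sum>B\<in>{B\<in>bases n \<pi>. I \<subseteq> B}. \<pi> B) else 0)"

definition pi_k :: "nat \<Rightarrow> nat \<Rightarrow> (nat set \<Rightarrow> real) \<Rightarrow> nat \<Rightarrow> nat set \<Rightarrow> real" where
  "pi_k n r \<pi> k I = weight n r \<pi> I / (\<Sum>J\<in>indep_k n \<pi> k. weight n r \<pi> J)"

definition up_down :: "nat \<Rightarrow> nat \<Rightarrow> (nat set \<Rightarrow> real) \<Rightarrow> nat \<Rightarrow> nat set \<Rightarrow> nat set \<Rightarrow> real" where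
  "up_down n r \<pi> k I J =
     (if I = J then 1 / (real k + 1)
      else if I \<union> J \<in> indep_k n \<pi> (k + 1)
      then weight n r \<pi> (I \<union> J) / ((real k + 1) * weight n r \<pi> I)
      else 0)"

definition down_up :: "nat \<Rightarrow> nat \<Rightarrow> (nat set \<Rightarrow> real) \<Rightarrow> nat \<Rightarrow> nat set \<Rightarrow> nat set \<Rightarrow> real" where
  "down_up n r \<pi> k I J =
     (if I = J then (\<Sum>I'\<in>{I'\<in>indep_k n \<pi> (k - 1). I' \<subset> I}.
                        weight n r \<pi> I / (real k * weight n r \<pi> I'))
      else if card (I \<inter> J) = k - 1
      then weight n r \<pi> J / (real k * weight n r \<pi> (I \<inter> J))
      else 0)"

definition dirichlet :: "'s set \<Rightarrow> ('s \<Rightarrow> real) \<Rightarrow> ('s \<Rightarrow> 's \<Rightarrow> real) \<Rightarrow> ('s \<Rightarrow> real) \<Rightarrow> ('s \<Rightarrow> real) \<Rightarrow> real" where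
  "dirichlet \<Omega> \<mu> P f g =
     (\<Sum>x\<in>\<Omega>. \<Sum>y\<in>\<Omega>. \<mu> x * f x * ((if x = y then 1 else 0) - P x y) * g y)"

definition entropy :: "'s set \<Rightarrow> ('s \<Rightarrow> real) \<Rightarrow> ('s \<Rightarrow> real) \<Rightarrow> real" where
  "entropy \<Omega> \<mu> f =
     (\<Sum>x\<in>\<Omega>. \<mu> x * (f x * ln (f x))) - (\<Sum>x\<in>\<Omega>. \<mu> x * f x) * ln (\<Sum>x\<in>\<Omega>. \<mu> x * f x)"

definition mlsc :: "'s set \<Rightarrow> ('s \<Rightarrow> real) \<Rightarrow> ('s \<Rightarrow> 's \<Rightarrow> real) \<Rightarrow> ereal" where
  "mlsc \<Omega> \<mu> P = Inf {ereal (dirichlet \<Omega> \<mu> P f (\<lambda>x. ln (f x)) / entropy \<Omega> \<mu> f) | f.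
       (\<forall>x\<in>\<Omega>. f x > 0) \<and> entropy \<Omega> \<mu> f \<noteq> 0}"

end

theory Submission
  imports Defs
begin

(*
  Strong log-concavity of g enters only through its links: for an independent set s,
  negative semidefiniteness of the Hessian of ln (d_s g) at 1 says that the matrix
  Q(e,f) = d_e d_f d_s g(1) is nonpositive on the hyperplane orthogonal to
  b(e) = d_e d_s g(1). Together with the log-sum inequality this gives, at every link,
  an inequality between x ln x averages on three consecutive levels. Summed over all
  links of size k, it shows that i |-> Ent_i (D^(j-i) g) is convex, where D (sup_avg)
  averages a function on (i+1)-sets over supersets with weights w. Since Ent_0 = 0,
  convexity yields Ent_(k-1) (D g) <= (1 - 1/k) Ent_k g, and Jensen yields
  Ent_(k+1) (U f) <= Ent_k f for the uniform average U (sub_avg) over subsets.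
  The down-up walk acts as U D and the up-down walk as D U; both are self-adjoint
  for pi_k, and for such an operator T the inequality ln x <= x - 1 gives
  E(f, ln f) >= Ent f - Ent (T f), so rho >= 1 - c as soon as Ent (T f) <= c Ent f.
*)

section \<open>Derivatives of the generating polynomial\<close>

definition monomial_sum :: "nat set set \<Rightarrow> (nat set \<Rightarrow> real) \<Rightarrow> nat set \<Rightarrow> (nat \<Rightarrow> real) \<Rightarrow> real" where
  "monomial_sum F c T x = (\<Sum>S\<in>F. c S * (\<Prod>j\<in>S - T. x j))"

lemma monomial_sum_one: "monomial_sum F c T (\<lambda>_. 1) = (\<Sum>S\<in>F. c S)"
  unfolding monomial_sum_def by simp

lemma monomial_sum_fun_upd:
  assumes "finite F" "\<forall>S\<in>F. finite S"
  shows "monomial_sum F c T (x(i := t)) =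
    monomial_sum {S\<in>F. \<not> (i \<in> S \<and> i \<notin> T)} c T x + t * monomial_sum {S\<in>F. i \<in> S \<and> i \<notin> T} c (insert i T) x"
proof -
  have factor: "c S * (\<Prod>j\<in>S - T. (x(i := t)) j) =
      (if i \<in> S \<and> i \<notin> T then t * (c S * (\<Prod>j\<in>S - insert i T. x j)) else c S * (\<Prod>j\<in>S - T. x j))"
    if "S \<in> F" for S
  proof (cases "i \<in> S \<and> i \<notin> T")
    case True
    have "(\<Prod>j\<in>S - T. (x(i := t)) j) = t * (\<Prod>j\<in>S - T - {i}. (x(i := t)) j)"
      using True assms that by (subst prod.remove[of _ i]) auto
    also have "(\<Prod>j\<in>S - T - {i}. (x(i := t)) j) = (\<Prod>j\<in>S - insert i T. x j)"
      by (intro prod.cong) auto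
    finally show ?thesis using True by simp
  next
    case False
    then have "(\<Prod>j\<in>S - T. (x(i := t)) j) = (\<Prod>j\<in>S - T. x j)"
      by (intro prod.cong) auto
    then show ?thesis using False by (simp only: if_False)
  qed
  have "monomial_sum F c T (x(i := t)) =
      (\<Sum>S\<in>F. if \<not> (i \<in> S \<and> i \<notin> T) then c S * (\<Prod>j\<in>S - T. x j) else 0) +
      (\<Sum>S\<in>F. if i \<in> S \<and> i \<notin> T then t * (c S * (\<Prod>j\<in>S - insert i T. x j)) else 0)"
    unfolding monomial_sum_def sum.distrib[symmetric] by (rule sum.cong[OF refl], subst factor) auto
  then show ?thesis
    unfolding monomial_sum_def using assms(1) by (simp add: sum.inter_filter sum_distrib_left, intro sum.cong) auto
qed

lemma partial_monomial_sum:
  assumes "finite F" "\<forall>S\<in>F. finite S"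
  shows "partial i (monomial_sum F c T) = monomial_sum {S\<in>F. i \<in> S \<and> i \<notin> T} c (insert i T)"
proof
  fix x
  let ?a = "monomial_sum {S\<in>F. \<not> (i \<in> S \<and> i \<notin> T)} c T x"
    and ?b = "monomial_sum {S\<in>F. i \<in> S \<and> i \<notin> T} c (insert i T) x"
  have "((\<lambda>t. ?a + t * ?b) has_field_derivative ?b) (at (x i))"
    by (auto intro!: derivative_eq_intros)
  then show "partial i (monomial_sum F c T) x = ?b"
    unfolding partial_def monomial_sum_fun_upd[OF assms] by (simp add: DERIV_imp_deriv)
qed

lemma partial_set_gen_poly:
  assumes "finite J"
  shows "partial_set J (gen_poly n p) = monomial_sum {S\<in>Pow {..<n}. J \<subseteq> S} p J"
proof -
  have "foldr partial l (monomial_sum (Pow {..<n}) p {}) = monomial_sum {S\<in>Pow {..<n}. set l \<subseteq> S} p (set l)"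
    if "distinct l" for l
    using that
  proof (induction l)
    case (Cons a l)
    have "{S\<in>{S\<in>Pow {..<n}. set l \<subseteq> S}. a \<in> S \<and> a \<notin> set l} = {S\<in>Pow {..<n}. set (a # l) \<subseteq> S}"
      using Cons.prems by auto
    moreover have "partial a (monomial_sum {S\<in>Pow {..<n}. set l \<subseteq> S} p (set l)) =
        monomial_sum {S\<in>{S\<in>Pow {..<n}. set l \<subseteq> S}. a \<in> S \<and> a \<notin> set l} p (insert a (set l))"
      by (rule partial_monomial_sum) (auto intro: finite_subset)
    ultimately show ?case
      using Cons by simp
  qed (simp add: Pow_def)
  moreover have "gen_poly n p = monomial_sum (Pow {..<n}) p {}"
    unfolding gen_poly_def monomial_sum_def by (intro ext) simp
  ultimately show ?thesis
    unfolding partial_set_def using assms by simp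
qed

lemma partial_ln_monomial_sum:
  assumes "finite F" "\<forall>S\<in>F. finite S" "monomial_sum F c T x > 0"
  shows "partial j (\<lambda>x. ln (monomial_sum F c T x)) x = partial j (monomial_sum F c T) x / monomial_sum F c T x"
proof -
  let ?a = "monomial_sum {S\<in>F. \<not> (j \<in> S \<and> j \<notin> T)} c T x"
    and ?b = "monomial_sum {S\<in>F. j \<in> S \<and> j \<notin> T} c (insert j T) x"
  have val: "monomial_sum F c T x = ?a + x j * ?b"
    using monomial_sum_fun_upd[OF assms(1,2), where x = x and i = j and t = "x j"] by simp
  have "((\<lambda>t. ln (?a + t * ?b)) has_field_derivative ?b / (?a + x j * ?b)) (at (x j))"
    using assms(3) val by (auto intro!: derivative_eq_intros)
  then have "deriv (\<lambda>t. ln (?a + t * ?b)) (x j) = ?b / monomial_sum F c T x"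
    using val by (simp add: DERIV_imp_deriv)
  then show ?thesis
    unfolding partial_monomial_sum[OF assms(1,2)] unfolding partial_def monomial_sum_fun_upd[OF assms(1,2)] .
qed

lemma partial_partial_ln_monomial_sum_one:
  assumes fin: "finite F" "\<forall>S\<in>F. finite S" and nonneg: "\<And>S. c S \<ge> 0"
    and pos: "monomial_sum F c T (\<lambda>_. 1) > 0"
  shows "partial i (partial j (\<lambda>x. ln (monomial_sum F c T x))) (\<lambda>_. 1) =
    (partial i (partial j (monomial_sum F c T)) (\<lambda>_. 1) * monomial_sum F c T (\<lambda>_. 1)
      - partial j (monomial_sum F c T) (\<lambda>_. 1) * partial i (monomial_sum F c T) (\<lambda>_. 1))
    / (monomial_sum F c T (\<lambda>_. 1))\<^sup>2"
proof -
  define one :: "nat \<Rightarrow> real" where "one = (\<lambda>_. 1)"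
  define Fj where "Fj = {S\<in>F. j \<in> S \<and> j \<notin> T}"
  define a0 where "a0 = monomial_sum {S\<in>F. \<not> (i \<in> S \<and> i \<notin> T)} c T one"
  define b0 where "b0 = monomial_sum {S\<in>F. i \<in> S \<and> i \<notin> T} c (insert i T) one"
  define a1 where "a1 = monomial_sum {S\<in>Fj. \<not> (i \<in> S \<and> i \<notin> insert j T)} c (insert j T) one"
  define b1 where "b1 = monomial_sum {S\<in>Fj. i \<in> S \<and> i \<notin> insert j T} c (insert i (insert j T)) one"
  have finj: "finite Fj" "\<forall>S\<in>Fj. finite S" using fin unfolding Fj_def by auto
  have pj: "partial j (monomial_sum F c T) = monomial_sum Fj c (insert j T)"
    unfolding Fj_def by (rule partial_monomial_sum[OF fin])
  have line0: "monomial_sum F c T (one(i := s)) = a0 + s * b0" for s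
    unfolding a0_def b0_def by (rule monomial_sum_fun_upd[OF fin])
  have line1: "monomial_sum Fj c (insert j T) (one(i := s)) = a1 + s * b1" for s
    unfolding a1_def b1_def by (rule monomial_sum_fun_upd[OF finj])
  have "one(i := 1) = one" unfolding one_def by auto
  then have at_one: "monomial_sum F c T one = a0 + b0" "monomial_sum Fj c (insert j T) one = a1 + b1"
    using line0[of 1] line1[of 1] by simp_all
  have "a0 \<ge> 0" "b0 \<ge> 0"
    unfolding a0_def b0_def one_def monomial_sum_one using nonneg by (auto intro: sum_nonneg)
  then have line0_pos: "a0 + s * b0 > 0" if "s > 0" for s
    using that pos at_one unfolding one_def
    by (cases "b0 = 0") (auto intro: add_nonneg_pos)
  have "\<forall>\<^sub>F s in nhds 1. s \<in> {0::real<..}"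
    by (intro eventually_nhds_in_open) auto
  then have "\<forall>\<^sub>F s in nhds 1. partial j (\<lambda>x. ln (monomial_sum F c T x)) (one(i := s)) = (a1 + s * b1) / (a0 + s * b0)"
    by eventually_elim (simp add: partial_ln_monomial_sum[OF fin] pj line0 line1 line0_pos)
  then have "partial i (partial j (\<lambda>x. ln (monomial_sum F c T x))) one = deriv (\<lambda>s. (a1 + s * b1) / (a0 + s * b0)) 1"
    unfolding partial_def[of i] by (simp add: one_def deriv_cong_ev)
  also have "\<dots> = (b1 * (a0 + b0) - (a1 + b1) * b0) / (a0 + b0)\<^sup>2"
  proof (rule DERIV_imp_deriv)
    show "((\<lambda>s. (a1 + s * b1) / (a0 + s * b0)) has_real_derivative (b1 * (a0 + b0) - (a1 + b1) * b0) / (a0 + b0)\<^sup>2) (at 1)"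
      using line0_pos[of 1] by (auto intro!: derivative_eq_intros simp: power2_eq_square)
  qed
  moreover have "partial i (monomial_sum F c T) one = b0"
    unfolding b0_def partial_monomial_sum[OF fin] ..
  moreover have "partial i (partial j (monomial_sum F c T)) one = b1"
    unfolding b1_def pj partial_monomial_sum[OF finj] ..
  ultimately show ?thesis
    unfolding one_def[symmetric] using at_one pj by simp
qed

definition base_weight :: "nat \<Rightarrow> (nat set \<Rightarrow> real) \<Rightarrow> nat set \<Rightarrow> real" where
  "base_weight n p X = (\<Sum>B\<in>{B\<in>bases n p. X \<subseteq> B}. p B)"

definition link_grad :: "nat \<Rightarrow> (nat set \<Rightarrow> real) \<Rightarrow> nat set \<Rightarrow> nat \<Rightarrow> real" where
  "link_grad n p s e = (if e \<notin> s then base_weight n p (insert e s) else 0)"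

definition link_hess :: "nat \<Rightarrow> (nat set \<Rightarrow> real) \<Rightarrow> nat set \<Rightarrow> nat \<Rightarrow> nat \<Rightarrow> real" where
  "link_hess n p s e f =
    (if e \<noteq> f \<and> e \<notin> s \<and> f \<notin> s then base_weight n p (insert e (insert f s)) else 0)"

lemma finite_bases: "finite (bases n p)"
  unfolding bases_def by (rule finite_subset[of _ "Pow {..<n}"]) auto

lemma monomial_sum_Pow_one:
  "monomial_sum {S\<in>Pow {..<n}. P S} p T (\<lambda>_. 1) = (\<Sum>B\<in>{B\<in>bases n p. P B}. p B)"
  unfolding monomial_sum_one by (rule sum.mono_neutral_cong_right) (auto simp: bases_def)

lemma link_derivatives_at_one:
  fixes n :: nat and p :: "nat set \<Rightarrow> real" and s :: "nat set"
  defines "P \<equiv> monomial_sum {S\<in>Pow {..<n}. s \<subseteq> S} p s"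
  shows "P (\<lambda>_. 1) = base_weight n p s"
    and "partial j P (\<lambda>_. 1) = link_grad n p s j"
    and "partial i (partial j P) (\<lambda>_. 1) = link_hess n p s i j"
proof -
  define F where "F = {S\<in>Pow {..<n}. s \<subseteq> S}"
  have fin: "finite F" "\<forall>S\<in>F. finite S" unfolding F_def by (auto intro: finite_subset)
  have finj: "finite {S\<in>F. j \<in> S \<and> j \<notin> s}" "\<forall>S\<in>{S\<in>F. j \<in> S \<and> j \<notin> s}. finite S"
    using fin by auto
  show "P (\<lambda>_. 1) = base_weight n p s"
    unfolding P_def base_weight_def by (rule monomial_sum_Pow_one)
  have "partial j P (\<lambda>_. 1) = (\<Sum>B\<in>{B\<in>bases n p. s \<subseteq> B \<and> j \<in> B \<and> j \<notin> s}. p B)"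
    unfolding P_def F_def[symmetric] partial_monomial_sum[OF fin] unfolding F_def
    using monomial_sum_Pow_one[of n "\<lambda>S. s \<subseteq> S \<and> j \<in> S \<and> j \<notin> s"]
    by simp
  then show "partial j P (\<lambda>_. 1) = link_grad n p s j"
    unfolding link_grad_def base_weight_def by (cases "j \<in> s") (auto intro!: sum.cong)
  have "partial i (partial j P) (\<lambda>_. 1) =
      (\<Sum>B\<in>{B\<in>bases n p. s \<subseteq> B \<and> j \<in> B \<and> j \<notin> s \<and> i \<in> B \<and> i \<notin> insert j s}. p B)"
    unfolding P_def F_def[symmetric] partial_monomial_sum[OF fin] partial_monomial_sum[OF finj] unfolding F_def
    using monomial_sum_Pow_one[of n "\<lambda>S. s \<subseteq> S \<and> j \<in> S \<and> j \<notin> s \<and> i \<in> S \<and> i \<notin> insert j s"]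
    by simp
  then show "partial i (partial j P) (\<lambda>_. 1) = link_hess n p s i j"
    unfolding link_hess_def base_weight_def
    by (cases "i \<noteq> j \<and> i \<notin> s \<and> j \<notin> s") (auto intro!: sum.cong)
qed

lemma link_hess_quadratic_form_le:
  assumes nonneg: "\<And>S. p S \<ge> 0"
    and slc: "strongly_log_concave_poly n (gen_poly n p)"
    and s: "s \<subseteq> {..<n}" and pos: "base_weight n p s > 0"
  shows "base_weight n p s * (\<Sum>e<n. \<Sum>f<n. v e * v f * link_hess n p s e f)
    \<le> (\<Sum>e<n. link_grad n p s e * v e)\<^sup>2"
proof -
  define W where "W = base_weight n p s"
  have fin: "finite {S\<in>Pow {..<n}. s \<subseteq> S}" "\<forall>S\<in>{S\<in>Pow {..<n}. s \<subseteq> S}. finite S"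
    by (auto intro: finite_subset)
  have "finite s" using s finite_subset by blast
  then have "partial_set s (gen_poly n p) = monomial_sum {S\<in>Pow {..<n}. s \<subseteq> S} p s"
    by (rule partial_set_gen_poly)
  moreover have "hessian_nsd n (\<lambda>x. ln (partial_set s (gen_poly n p) x)) (\<lambda>_. 1)"
    using slc s unfolding strongly_log_concave_poly_def by blast
  ultimately have nsd: "hessian_nsd n (\<lambda>x. ln (monomial_sum {S\<in>Pow {..<n}. s \<subseteq> S} p s x)) (\<lambda>_. 1)"
    by simp
  have pos1: "monomial_sum {S\<in>Pow {..<n}. s \<subseteq> S} p s (\<lambda>_. 1) > 0"
    using pos link_derivatives_at_one(1)[where n = n and p = p and s = s] by simp
  have "partial i (partial j (\<lambda>x. ln (monomial_sum {S\<in>Pow {..<n}. s \<subseteq> S} p s x))) (\<lambda>_. 1)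
      = (link_hess n p s i j * W - link_grad n p s j * link_grad n p s i) / W\<^sup>2" for i j
    using partial_partial_ln_monomial_sum_one[of "{S\<in>Pow {..<n}. s \<subseteq> S}" p s i j, OF fin nonneg pos1]
    unfolding link_derivatives_at_one W_def .
  then have "(\<Sum>i<n. \<Sum>j<n. v i * ((link_hess n p s i j * W - link_grad n p s j * link_grad n p s i) / W\<^sup>2) * v j) \<le> 0"
    using nsd unfolding hessian_nsd_def by simp
  also have "(\<Sum>i<n. \<Sum>j<n. v i * ((link_hess n p s i j * W - link_grad n p s j * link_grad n p s i) / W\<^sup>2) * v j)
     = (W * (\<Sum>e<n. \<Sum>f<n. v e * v f * link_hess n p s e f) - (\<Sum>e<n. link_grad n p s e * v e)\<^sup>2) / W\<^sup>2"
    using pos unfolding W_def[symmetric]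
    by (simp add: power2_eq_square sum_product sum_divide_distrib sum_distrib_left
        sum_subtractf[symmetric] diff_divide_distrib algebra_simps)
  finally show ?thesis
    using pos unfolding W_def by (simp add: divide_le_0_iff)
qed

section \<open>Entropy inequalities\<close>

definition xlnx :: "real \<Rightarrow> real" where
  "xlnx x = x * ln x"

lemma xlnx_tangent_le:
  assumes "x > 0" "y \<ge> 0"
  shows "xlnx x + (ln x + 1) * (y - x) \<le> xlnx y"
proof (cases "y = 0")
  case False
  then have "y > 0" using assms by simp
  have "y * ln (x / y) \<le> y * (x / y - 1)"
    using assms \<open>y > 0\<close> by (intro mult_left_mono ln_le_minus_one) auto
  moreover have "ln (x / y) = ln x - ln y" "y * (x / y - 1) = x - y"
    using assms \<open>y > 0\<close> by (simp_all add: ln_div field_simps)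
  ultimately have "y * (ln x - ln y) \<le> x - y"
    by simp
  then show ?thesis
    unfolding xlnx_def by (simp add: algebra_simps)
qed (use assms in \<open>simp add: xlnx_def algebra_simps\<close>)

lemma xlnx_jensen:
  fixes a f :: "'a \<Rightarrow> real"
  assumes "finite X" "\<And>x. x \<in> X \<Longrightarrow> a x \<ge> 0" "(\<Sum>x\<in>X. a x) = 1" "\<And>x. x \<in> X \<Longrightarrow> f x \<ge> 0"
    and mean_pos: "(\<Sum>x\<in>X. a x * f x) > 0"
  shows "xlnx (\<Sum>x\<in>X. a x * f x) \<le> (\<Sum>x\<in>X. a x * xlnx (f x))"
proof -
  define M where "M = (\<Sum>x\<in>X. a x * f x)"
  have "(\<Sum>x\<in>X. a x * (xlnx M + (ln M + 1) * (f x - M))) \<le> (\<Sum>x\<in>X. a x * xlnx (f x))"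
    using assms unfolding M_def by (intro sum_mono mult_left_mono xlnx_tangent_le) auto
  moreover have "(\<Sum>x\<in>X. a x * (xlnx M + (ln M + 1) * (f x - M)))
      = xlnx M * (\<Sum>x\<in>X. a x) + (ln M + 1) * ((\<Sum>x\<in>X. a x * f x) - M * (\<Sum>x\<in>X. a x))"
    by (simp add: algebra_simps sum.distrib sum_distrib_left sum_subtractf)
  ultimately show ?thesis using assms(3) unfolding M_def by simp
qed

lemma log_sum_inequality:
  fixes a c :: "'a \<Rightarrow> real"
  assumes "finite X" and a: "\<And>x. x \<in> X \<Longrightarrow> a x \<ge> 0" and c: "\<And>x. x \<in> X \<Longrightarrow> c x \<ge> 0"
    and ac: "\<And>x. x \<in> X \<Longrightarrow> a x > 0 \<Longrightarrow> c x > 0" and "(\<Sum>x\<in>X. a x) > 0"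
  shows "(\<Sum>x\<in>X. a x * ln (c x / a x)) \<le> (\<Sum>x\<in>X. a x) * ln ((\<Sum>x\<in>X. c x) / (\<Sum>x\<in>X. a x))"
proof -
  define A where "A = (\<Sum>x\<in>X. a x)"
  define C where "C = (\<Sum>x\<in>X. c x)"
  have "A > 0" unfolding A_def by fact
  then obtain x0 where "x0 \<in> X" "a x0 > 0"
    unfolding A_def by (metis less_irrefl sum.neutral linorder_neqE_linordered_idom a leD)
  then have "C > 0"
    unfolding C_def using assms by (intro sum_pos2[of _ x0]) auto
  have "a x * ln (c x / a x) \<le> a x * ln (C / A) + (c x * A / C - a x)" if "x \<in> X" for x
  proof (cases "a x = 0")
    case True
    then show ?thesis using c[OF that] \<open>A > 0\<close> \<open>C > 0\<close> by simp
  next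
    case False
    then have pos: "a x > 0" "c x > 0" using a ac that by (auto simp: less_le)
    define u where "u = c x * A / (a x * C)"
    have "ln (c x / a x) = ln (C / A) + ln u"
      unfolding u_def using pos \<open>A > 0\<close> \<open>C > 0\<close> by (simp add: ln_div ln_mult)
    moreover have "a x * ln u \<le> a x * (u - 1)"
      unfolding u_def using pos \<open>A > 0\<close> \<open>C > 0\<close> by (intro mult_left_mono ln_le_minus_one) auto
    moreover have "a x * (u - 1) = c x * A / C - a x"
      unfolding u_def using pos \<open>C > 0\<close> by (simp add: field_simps)
    ultimately show ?thesis by (simp add: distrib_left)
  qed
  then have "(\<Sum>x\<in>X. a x * ln (c x / a x)) \<le> (\<Sum>x\<in>X. a x * ln (C / A) + (c x * A / C - a x))"
    by (rule sum_mono)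
  also have "\<dots> = A * ln (C / A)"
    using \<open>C > 0\<close> unfolding A_def C_def
    by (simp add: sum.distrib sum_subtractf sum_distrib_right[symmetric] sum_divide_distrib[symmetric])
  finally show ?thesis unfolding A_def C_def .
qed

text \<open>If the quadratic form of \<open>Q\<close> is nonpositive on the hyperplane \<open>b\<^sup>\<bottom>\<close>, its restriction to the
  plane spanned by \<open>1\<close> and \<open>z\<close> cannot be positive definite, so its Gram determinant is \<open>\<le> 0\<close>.\<close>
lemma quadratic_form_reverse_cauchy_schwarz:
  fixes Q :: "'a \<Rightarrow> 'a \<Rightarrow> real" and b z :: "'a \<Rightarrow> real"
  assumes "finite N" and sym: "\<And>e f. Q e f = Q f e" and "c > 0"
    and lc: "\<And>v. c * (\<Sum>e\<in>N. \<Sum>f\<in>N. v e * v f * Q e f) \<le> (\<Sum>e\<in>N. b e * v e)\<^sup>2"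
    and total_pos: "(\<Sum>e\<in>N. \<Sum>f\<in>N. Q e f) > 0"
  shows "(\<Sum>e\<in>N. \<Sum>f\<in>N. Q e f) * (\<Sum>e\<in>N. \<Sum>f\<in>N. z e * z f * Q e f)
    \<le> (\<Sum>e\<in>N. (\<Sum>f\<in>N. Q e f) * z e)\<^sup>2"
proof -
  define A where "A = (\<Sum>e\<in>N. \<Sum>f\<in>N. Q e f)"
  define s where "s = (\<Sum>e\<in>N. (\<Sum>f\<in>N. Q e f) * z e)"
  define zz where "zz = (\<Sum>e\<in>N. \<Sum>f\<in>N. z e * z f * Q e f)"
  have "c * A \<le> (\<Sum>e\<in>N. b e)\<^sup>2"
    using lc[of "\<lambda>_. 1"] unfolding A_def by simp
  moreover have "c * A > 0"
    using \<open>c > 0\<close> total_pos unfolding A_def by simp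
  ultimately have b_sum: "(\<Sum>e\<in>N. b e) \<noteq> 0"
    by auto
  define t where "t = (\<Sum>e\<in>N. b e * z e) / (\<Sum>e\<in>N. b e)"
  have "(\<Sum>e\<in>N. b e * (z e - t)) = (\<Sum>e\<in>N. b e * z e) - t * (\<Sum>e\<in>N. b e)"
    by (simp add: algebra_simps sum_subtractf sum_distrib_left)
  then have b_orth: "(\<Sum>e\<in>N. b e * (z e - t)) = 0"
    using b_sum unfolding t_def by simp
  have row1: "(\<Sum>e\<in>N. \<Sum>f\<in>N. z e * Q e f) = s"
    unfolding s_def by (simp add: sum_distrib_left mult.commute)
  have "(\<Sum>e\<in>N. \<Sum>f\<in>N. z f * Q e f) = (\<Sum>f\<in>N. \<Sum>e\<in>N. z f * Q f e)"
    by (rule trans[OF sum.swap]) (simp add: sym)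
  with row1 have row2: "(\<Sum>e\<in>N. \<Sum>f\<in>N. z f * Q e f) = s"
    by simp
  have "(\<Sum>e\<in>N. \<Sum>f\<in>N. (z e - t) * (z f - t) * Q e f)
      = zz - t * (\<Sum>e\<in>N. \<Sum>f\<in>N. z e * Q e f) - t * (\<Sum>e\<in>N. \<Sum>f\<in>N. z f * Q e f) + t\<^sup>2 * A"
    unfolding zz_def A_def
    by (simp add: algebra_simps power2_eq_square sum.distrib sum_subtractf sum_distrib_left)
  then have "c * (zz - 2 * (s * t) + t\<^sup>2 * A) \<le> 0"
    using lc[of "\<lambda>e. z e - t"] b_orth row1 row2 by simp
  then have "zz \<le> 2 * (s * t) - t\<^sup>2 * A"
    using \<open>c > 0\<close> by (simp add: mult_le_0_iff)
  then have "A * zz \<le> A * (2 * (s * t) - t\<^sup>2 * A)"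
    using total_pos unfolding A_def by (intro mult_left_mono) auto
  also have "\<dots> \<le> s\<^sup>2"
    using zero_le_power2[of "s - t * A"] by (simp add: power2_eq_square algebra_simps)
  finally show ?thesis unfolding A_def zz_def s_def .
qed

lemma double_sum_pos_iff:
  fixes g :: "'a \<Rightarrow> 'a \<Rightarrow> real"
  assumes "finite N" and nonneg: "\<And>e f. e \<in> N \<Longrightarrow> f \<in> N \<Longrightarrow> g e f \<ge> 0"
  shows "(\<Sum>e\<in>N. \<Sum>f\<in>N. g e f) > 0 \<longleftrightarrow> (\<exists>e\<in>N. \<exists>f\<in>N. g e f > 0)"
proof
  assume "(\<Sum>e\<in>N. \<Sum>f\<in>N. g e f) > 0"
  then show "\<exists>e\<in>N. \<exists>f\<in>N. g e f > 0"
  proof (rule contrapos_pp)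
    assume "\<not> (\<exists>e\<in>N. \<exists>f\<in>N. g e f > 0)"
    then have "g e f = 0" if "e \<in> N" "f \<in> N" for e f
      using nonneg[OF that] that by force
    then show "\<not> (\<Sum>e\<in>N. \<Sum>f\<in>N. g e f) > 0" by simp
  qed
next
  assume "\<exists>e\<in>N. \<exists>f\<in>N. g e f > 0"
  then obtain e0 f0 where "e0 \<in> N" "f0 \<in> N" "g e0 f0 > 0" by blast
  then have row: "(\<Sum>f\<in>N. g e0 f) > 0"
    using assms by (intro sum_pos2[of _ f0]) auto
  show "(\<Sum>e\<in>N. \<Sum>f\<in>N. g e f) > 0"
    by (rule sum_pos2[of _ e0]) (use assms \<open>e0 \<in> N\<close> row in \<open>auto intro: sum_nonneg\<close>)
qed

lemma log_sum_inequality_pairs: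
  fixes Q h :: "'a \<Rightarrow> 'a \<Rightarrow> real" and z :: "'a \<Rightarrow> real"
  assumes fin: "finite N"
    and Q_nonneg: "\<And>e f. Q e f \<ge> 0" and Q_sym: "\<And>e f. Q e f = Q f e" and h_sym: "\<And>e f. h e f = h f e"
    and h_pos: "\<And>e f. e \<in> N \<Longrightarrow> f \<in> N \<Longrightarrow> Q e f > 0 \<Longrightarrow> h e f > 0"
    and z_nonneg: "\<And>e. e \<in> N \<Longrightarrow> z e \<ge> 0"
    and z_pos: "\<And>e f. e \<in> N \<Longrightarrow> f \<in> N \<Longrightarrow> Q e f > 0 \<Longrightarrow> z e > 0"
    and S_pos: "(\<Sum>e\<in>N. \<Sum>f\<in>N. Q e f * h e f) > 0"
  shows "2 * (\<Sum>e\<in>N. \<Sum>f\<in>N. Q e f * h e f * ln (z e)) - (\<Sum>e\<in>N. \<Sum>f\<in>N. Q e f * xlnx (h e f))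
    \<le> (\<Sum>e\<in>N. \<Sum>f\<in>N. Q e f * h e f) * ln ((\<Sum>e\<in>N. \<Sum>f\<in>N. Q e f * z e * z f) / (\<Sum>e\<in>N. \<Sum>f\<in>N. Q e f * h e f))"
proof -
  let ?a = "\<lambda>(e, f). Q e f * h e f" and ?c = "\<lambda>(e, f). Q e f * z e * z f"
  have pairs: "(\<Sum>x\<in>N \<times> N. g x) = (\<Sum>e\<in>N. \<Sum>f\<in>N. g (e, f))" for g :: "'a \<times> 'a \<Rightarrow> real"
    by (simp add: sum.cartesian_product)
  have Q_pos: "Q e f > 0" "Q f e > 0" if "?a (e, f) > 0" for e f
    using that Q_nonneg[of e f] Q_sym[of e f] by (auto simp: less_le)
  have "(\<Sum>x\<in>N \<times> N. ?a x * ln (?c x / ?a x))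
      \<le> (\<Sum>x\<in>N \<times> N. ?a x) * ln ((\<Sum>x\<in>N \<times> N. ?c x) / (\<Sum>x\<in>N \<times> N. ?a x))"
  proof (rule log_sum_inequality)
    show "(\<Sum>x\<in>N \<times> N. ?a x) > 0" using S_pos unfolding pairs by simp
  next
    fix x assume "x \<in> N \<times> N"
    then obtain e f where x: "x = (e, f)" "e \<in> N" "f \<in> N" by auto
    show "?a x \<ge> 0"
      using x Q_nonneg[of e f] h_pos[of e f] by (cases "Q e f > 0") (auto simp: less_le)
    show "?c x \<ge> 0"
      using x Q_nonneg[of e f] z_nonneg by simp
    show "?c x > 0" if "?a x > 0"
    proof -
      have "Q e f > 0" "Q f e > 0"
        using Q_pos[of e f] that x(1) by simp_all
      then show ?thesis
        using x z_pos[of e f] z_pos[of f e] by simp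
    qed
  qed (use fin in simp)
  also have "(\<Sum>x\<in>N \<times> N. ?a x * ln (?c x / ?a x))
      = (\<Sum>e\<in>N. \<Sum>f\<in>N. Q e f * h e f * ln (z e)) + (\<Sum>e\<in>N. \<Sum>f\<in>N. Q e f * h e f * ln (z f))
        - (\<Sum>e\<in>N. \<Sum>f\<in>N. Q e f * xlnx (h e f))"
  proof -
    have "?a (e, f) * ln (?c (e, f) / ?a (e, f))
        = Q e f * h e f * ln (z e) + Q e f * h e f * ln (z f) - Q e f * xlnx (h e f)"
      if "e \<in> N" "f \<in> N" for e f
    proof (cases "Q e f > 0")
      case True
      then have "Q f e > 0" using Q_sym by simp
      have ln_eq: "ln (Q e f * z e * z f / (Q e f * h e f)) = ln (z e) + ln (z f) - ln (h e f)"
        using True z_pos[OF that True] z_pos[OF that(2,1) \<open>Q f e > 0\<close>] h_pos[OF that True]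
        by (simp add: ln_div ln_mult)
      show ?thesis
        unfolding prod.case ln_eq by (simp add: xlnx_def algebra_simps)
    qed (use Q_nonneg[of e f] in \<open>simp add: less_le\<close>)
    then show ?thesis
      unfolding pairs by (simp add: sum.distrib sum_subtractf)
  qed
  also have "(\<Sum>e\<in>N. \<Sum>f\<in>N. Q e f * h e f * ln (z f)) = (\<Sum>e\<in>N. \<Sum>f\<in>N. Q e f * h e f * ln (z e))"
    by (rule trans[OF sum.swap]) (simp add: Q_sym h_sym)
  finally show ?thesis
    unfolding pairs by simp
qed

lemma local_entropy_inequality:
  fixes Q h :: "'a \<Rightarrow> 'a \<Rightarrow> real" and b z :: "'a \<Rightarrow> real"
  assumes fin: "finite N"
    and Q_nonneg: "\<And>e f. Q e f \<ge> 0" and Q_sym: "\<And>e f. Q e f = Q f e" and h_sym: "\<And>e f. h e f = h f e"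
    and h_pos: "\<And>e f. e \<in> N \<Longrightarrow> f \<in> N \<Longrightarrow> Q e f > 0 \<Longrightarrow> h e f > 0"
    and "c > 0"
    and lc: "\<And>v. c * (\<Sum>e\<in>N. \<Sum>f\<in>N. v e * v f * Q e f) \<le> (\<Sum>e\<in>N. b e * v e)\<^sup>2"
    and total_pos: "(\<Sum>e\<in>N. \<Sum>f\<in>N. Q e f) > 0"
    and z_nonneg: "\<And>e. e \<in> N \<Longrightarrow> z e \<ge> 0"
    and row_mean: "\<And>e. e \<in> N \<Longrightarrow> (\<Sum>f\<in>N. Q e f) * z e = (\<Sum>f\<in>N. Q e f * h e f)"
  shows "2 * (\<Sum>e\<in>N. (\<Sum>f\<in>N. Q e f) * xlnx (z e))
    \<le> (\<Sum>e\<in>N. \<Sum>f\<in>N. Q e f * xlnx (h e f))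
      + (\<Sum>e\<in>N. \<Sum>f\<in>N. Q e f) * xlnx ((\<Sum>e\<in>N. \<Sum>f\<in>N. Q e f * h e f) / (\<Sum>e\<in>N. \<Sum>f\<in>N. Q e f))"
proof -
  define A where "A = (\<Sum>e\<in>N. \<Sum>f\<in>N. Q e f)"
  define S where "S = (\<Sum>e\<in>N. \<Sum>f\<in>N. Q e f * h e f)"
  define ZZ where "ZZ = (\<Sum>e\<in>N. \<Sum>f\<in>N. Q e f * z e * z f)"
  have Qh_nonneg: "Q e f * h e f \<ge> 0" if "e \<in> N" "f \<in> N" for e f
    using Q_nonneg[of e f] h_pos[OF that] by (cases "Q e f > 0") (auto simp: less_le)
  have z_pos: "z e > 0" if "e \<in> N" "f \<in> N" "Q e f > 0" for e f
  proof -
    have "Q e f \<le> (\<Sum>f\<in>N. Q e f)" "Q e f * h e f \<le> (\<Sum>f\<in>N. Q e f * h e f)"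
      using fin that Q_nonneg Qh_nonneg by (auto intro: member_le_sum)
    moreover have "Q e f * h e f > 0"
      using h_pos[OF that] that(3) by simp
    ultimately have "0 < (\<Sum>f\<in>N. Q e f) * z e" "(\<Sum>f\<in>N. Q e f) > 0"
      using row_mean[OF that(1)] that(3) by linarith+
    then show ?thesis
      by (simp add: zero_less_mult_iff)
  qed
  obtain e0 f0 where e0f0: "e0 \<in> N" "f0 \<in> N" "Q e0 f0 > 0"
    using total_pos double_sum_pos_iff[OF fin, of Q] Q_nonneg by auto
  have "Q e0 f0 * h e0 f0 > 0" "Q e0 f0 * z e0 * z f0 > 0"
    using e0f0 h_pos[OF e0f0] z_pos[OF e0f0] z_pos[OF e0f0(2,1)] Q_sym[of e0 f0] by simp_all
  moreover have "Q e f * z e * z f \<ge> 0" if "e \<in> N" "f \<in> N" for e f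
    using that Q_nonneg z_nonneg by simp
  ultimately have "S > 0" "ZZ > 0"
    unfolding S_def ZZ_def using e0f0 Qh_nonneg by (subst double_sum_pos_iff[OF fin]; blast)+
  have "(\<Sum>e\<in>N. (\<Sum>f\<in>N. Q e f) * xlnx (z e)) = (\<Sum>e\<in>N. \<Sum>f\<in>N. Q e f * h e f * ln (z e))"
    unfolding xlnx_def using row_mean by (simp add: sum_distrib_right flip: mult.assoc)
  then have "2 * (\<Sum>e\<in>N. (\<Sum>f\<in>N. Q e f) * xlnx (z e))
      = 2 * (\<Sum>e\<in>N. \<Sum>f\<in>N. Q e f * h e f * ln (z e))"
    by simp
  also have "\<dots> \<le> (\<Sum>e\<in>N. \<Sum>f\<in>N. Q e f * xlnx (h e f)) + S * ln (ZZ / S)"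
    using log_sum_inequality_pairs[of N Q h z, OF fin Q_nonneg Q_sym h_sym h_pos z_nonneg _ \<open>S > 0\<close>[unfolded S_def]]
      z_pos
    unfolding S_def ZZ_def by simp
  also have "S * ln (ZZ / S) \<le> A * xlnx (S / A)"
  proof -
    have "A * ZZ \<le> (\<Sum>e\<in>N. (\<Sum>f\<in>N. Q e f) * z e)\<^sup>2"
      using quadratic_form_reverse_cauchy_schwarz[OF fin Q_sym \<open>c > 0\<close> lc total_pos]
      unfolding A_def ZZ_def by (simp add: ac_simps)
    also have "\<dots> = S\<^sup>2"
      unfolding S_def by (simp add: row_mean)
    finally have "ZZ / S \<le> S / A"
      using \<open>S > 0\<close> total_pos unfolding A_def by (simp add: field_simps power2_eq_square)
    then show ?thesis
      using \<open>S > 0\<close> \<open>ZZ > 0\<close> total_pos unfolding xlnx_def A_def by (simp add: mult_left_mono)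
  qed
  finally show ?thesis
    unfolding A_def S_def by simp
qed

lemma convex_seq_ratio_le:
  fixes E :: "nat \<Rightarrow> real"
  assumes "E 0 = 0"
    and convex: "\<And>i. i + 2 \<le> j \<Longrightarrow> 2 * E (Suc i) \<le> E i + E (Suc (Suc i))"
    and "i < j"
  shows "real (Suc i) * E i \<le> real i * E (Suc i)"
  using \<open>i < j\<close>
proof (induction i)
  case (Suc i)
  then have IH: "real (Suc i) * E i \<le> real i * E (Suc i)"
    by simp
  have "real (Suc i) * (2 * E (Suc i)) \<le> real (Suc i) * (E i + E (Suc (Suc i)))"
    using convex[of i] Suc.prems by (intro mult_left_mono) auto
  with IH show ?case
    by (simp add: algebra_simps)
qed (simp add: assms(1))

lemma entropy_xlnx:
  "entropy \<Omega> \<mu> f = (\<Sum>x\<in>\<Omega>. \<mu> x * xlnx (f x)) - xlnx (\<Sum>x\<in>\<Omega>. \<mu> x * f x)"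
  unfolding entropy_def xlnx_def ..

lemma entropy_nonneg:
  assumes "finite \<Omega>" "\<And>x. x \<in> \<Omega> \<Longrightarrow> \<mu> x \<ge> 0" "(\<Sum>x\<in>\<Omega>. \<mu> x) = 1" "\<And>x. x \<in> \<Omega> \<Longrightarrow> f x > 0"
  shows "entropy \<Omega> \<mu> f \<ge> 0"
proof -
  obtain x0 where "x0 \<in> \<Omega>" "\<mu> x0 \<noteq> 0"
    using assms(3) sum.neutral[of \<Omega> \<mu>] by (metis zero_neq_one)
  then have "(\<Sum>x\<in>\<Omega>. \<mu> x * f x) > 0"
    using assms by (intro sum_pos2[of _ x0]) (auto simp: less_le)
  then have "xlnx (\<Sum>x\<in>\<Omega>. \<mu> x * f x) \<le> (\<Sum>x\<in>\<Omega>. \<mu> x * xlnx (f x))"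
    using assms by (intro xlnx_jensen) (auto simp: less_imp_le)
  then show ?thesis
    unfolding entropy_xlnx by simp
qed

lemma dirichlet_ge_entropy_diff:
  assumes fin: "finite \<Omega>" and \<mu>: "\<And>x. x \<in> \<Omega> \<Longrightarrow> \<mu> x \<ge> 0" and f: "\<And>x. x \<in> \<Omega> \<Longrightarrow> f x > 0"
    and Pf: "\<And>x. x \<in> \<Omega> \<Longrightarrow> Pf x = (\<Sum>y\<in>\<Omega>. P x y * f y)"
    and Pf_nonneg: "\<And>x. x \<in> \<Omega> \<Longrightarrow> Pf x \<ge> 0"
    and adjoint: "(\<Sum>x\<in>\<Omega>. \<mu> x * f x * (\<Sum>y\<in>\<Omega>. P x y * ln (f y))) = (\<Sum>x\<in>\<Omega>. \<mu> x * Pf x * ln (f x))"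
    and mean: "(\<Sum>x\<in>\<Omega>. \<mu> x * Pf x) = (\<Sum>x\<in>\<Omega>. \<mu> x * f x)"
  shows "entropy \<Omega> \<mu> f - entropy \<Omega> \<mu> Pf \<le> dirichlet \<Omega> \<mu> P f (\<lambda>x. ln (f x))"
proof -
  have "dirichlet \<Omega> \<mu> P f (\<lambda>x. ln (f x))
      = (\<Sum>x\<in>\<Omega>. \<Sum>y\<in>\<Omega>. (if x = y then \<mu> x * f x * ln (f y) else 0) - \<mu> x * f x * (P x y * ln (f y)))"
    unfolding dirichlet_def by (intro sum.cong refl) (simp add: algebra_simps)
  also have "\<dots> = (\<Sum>x\<in>\<Omega>. \<mu> x * f x * ln (f x)) - (\<Sum>x\<in>\<Omega>. \<mu> x * Pf x * ln (f x))"
    using fin by (simp add: sum_subtractf sum_distrib_left adjoint[symmetric])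
  finally have D: "dirichlet \<Omega> \<mu> P f (\<lambda>x. ln (f x))
      = (\<Sum>x\<in>\<Omega>. \<mu> x * f x * ln (f x)) - (\<Sum>x\<in>\<Omega>. \<mu> x * Pf x * ln (f x))" .
  have "\<mu> x * (Pf x - f x) \<le> \<mu> x * (Pf x * ln (Pf x) - Pf x * ln (f x))" if "x \<in> \<Omega>" for x
  proof (intro mult_left_mono)
    show "Pf x - f x \<le> Pf x * ln (Pf x) - Pf x * ln (f x)"
    proof (cases "Pf x = 0")
      case False
      then have "Pf x > 0" using Pf_nonneg[OF that] by simp
      then have "Pf x * ln (f x / Pf x) \<le> Pf x * (f x / Pf x - 1)"
        using f[OF that] by (intro mult_left_mono ln_le_minus_one) auto
      then show ?thesis using \<open>Pf x > 0\<close> f[OF that] by (simp add: ln_div algebra_simps)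
    qed (use f[OF that] in simp)
  qed (use \<mu>[OF that] in simp)
  then have "(\<Sum>x\<in>\<Omega>. \<mu> x * (Pf x - f x)) \<le> (\<Sum>x\<in>\<Omega>. \<mu> x * (Pf x * ln (Pf x) - Pf x * ln (f x)))"
    by (rule sum_mono)
  moreover have "(\<Sum>x\<in>\<Omega>. \<mu> x * (Pf x - f x)) = 0"
    using mean by (simp add: algebra_simps sum_subtractf)
  ultimately show ?thesis
    unfolding D entropy_def mean by (simp add: algebra_simps sum_subtractf)
qed

lemma mlsc_ge_of_entropy_contraction:
  fixes T :: "('s \<Rightarrow> real) \<Rightarrow> 's \<Rightarrow> real"
  assumes fin: "finite \<Omega>" and \<mu>: "\<And>x. x \<in> \<Omega> \<Longrightarrow> \<mu> x \<ge> 0" "(\<Sum>x\<in>\<Omega>. \<mu> x) = 1"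
    and kernel: "\<And>\<phi> x. x \<in> \<Omega> \<Longrightarrow> (\<Sum>y\<in>\<Omega>. P x y * \<phi> y) = T \<phi> x"
    and T_one: "\<And>x. x \<in> \<Omega> \<Longrightarrow> T (\<lambda>_. 1) x = 1"
    and T_adjoint: "\<And>\<phi> \<psi>. (\<Sum>x\<in>\<Omega>. \<mu> x * \<phi> x * T \<psi> x) = (\<Sum>x\<in>\<Omega>. \<mu> x * T \<phi> x * \<psi> x)"
    and T_nonneg: "\<And>f x. \<forall>y\<in>\<Omega>. f y > 0 \<Longrightarrow> x \<in> \<Omega> \<Longrightarrow> T f x \<ge> 0"
    and T_contraction: "\<And>f. \<forall>y\<in>\<Omega>. f y > 0 \<Longrightarrow> entropy \<Omega> \<mu> (T f) \<le> c * entropy \<Omega> \<mu> f"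
  shows "mlsc \<Omega> \<mu> P \<ge> ereal (1 - c)"
  unfolding mlsc_def
proof (rule Inf_greatest, clarify)
  fix f assume f: "\<forall>x\<in>\<Omega>. f x > 0" and "entropy \<Omega> \<mu> f \<noteq> 0"
  moreover have "entropy \<Omega> \<mu> f \<ge> 0"
    using fin \<mu> f by (intro entropy_nonneg) auto
  ultimately have E_pos: "entropy \<Omega> \<mu> f > 0" by simp
  have "entropy \<Omega> \<mu> f - entropy \<Omega> \<mu> (T f) \<le> dirichlet \<Omega> \<mu> P f (\<lambda>x. ln (f x))"
  proof (rule dirichlet_ge_entropy_diff[OF fin])
    show "(\<Sum>x\<in>\<Omega>. \<mu> x * f x * (\<Sum>y\<in>\<Omega>. P x y * ln (f y))) = (\<Sum>x\<in>\<Omega>. \<mu> x * T f x * ln (f x))"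
      using T_adjoint[of f "\<lambda>y. ln (f y)"] by (simp add: kernel)
    show "(\<Sum>x\<in>\<Omega>. \<mu> x * T f x) = (\<Sum>x\<in>\<Omega>. \<mu> x * f x)"
      using T_adjoint[of "\<lambda>_. 1" f] by (simp add: T_one)
  qed (use \<mu> f kernel T_nonneg in auto)
  then have "(1 - c) * entropy \<Omega> \<mu> f \<le> dirichlet \<Omega> \<mu> P f (\<lambda>x. ln (f x))"
    using T_contraction[OF f] by (simp add: algebra_simps)
  then show "ereal (1 - c) \<le> ereal (dirichlet \<Omega> \<mu> P f (\<lambda>x. ln (f x)) / entropy \<Omega> \<mu> f)"
    using E_pos by (simp add: field_simps)
qed

section \<open>Levels and averaging operators\<close>

locale log_concave_links =
  fixes n r :: nat and p :: "nat set \<Rightarrow> real"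
  assumes nonneg: "\<And>S. p S \<ge> 0"
    and support: "\<And>S. p S \<noteq> 0 \<Longrightarrow> S \<subseteq> {..<n} \<and> card S = r"
    and bases_nonempty: "bases n p \<noteq> {}"
    and link_lc: "\<And>s v. s \<subseteq> {..<n} \<Longrightarrow> base_weight n p s > 0 \<Longrightarrow>
      base_weight n p s * (\<Sum>e<n. \<Sum>f<n. v e * v f * link_hess n p s e f)
        \<le> (\<Sum>e<n. link_grad n p s e * v e)\<^sup>2"
begin

abbreviation W :: "nat set \<Rightarrow> real" where
  "W \<equiv> base_weight n p"

abbreviation indep :: "nat \<Rightarrow> nat set set" where
  "indep \<equiv> indep_k n p"

definition level :: "nat \<Rightarrow> nat set set" where
  "level m = {I. I \<subseteq> {..<n} \<and> card I = m}"

lemma finite_level [simp]: "finite (level m)"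
  unfolding level_def by (rule finite_subset[of _ "Pow {..<n}"]) auto

lemma level_subset: "I \<in> level m \<Longrightarrow> I \<subseteq> {..<n}"
  and level_card: "I \<in> level m \<Longrightarrow> card I = m"
  and level_finite: "I \<in> level m \<Longrightarrow> finite I"
  unfolding level_def using finite_subset by auto

lemma insert_in_level: "I \<in> level m \<Longrightarrow> e \<in> {..<n} - I \<Longrightarrow> insert e I \<in> level (Suc m)"
  unfolding level_def by (auto simp: finite_subset[of I "{..<n}"])

lemma remove_in_level: "K \<in> level (Suc m) \<Longrightarrow> e \<in> K \<Longrightarrow> K - {e} \<in> level m"
  unfolding level_def using finite_subset by auto

lemma basesD:
  assumes "B \<in> bases n p"
  shows "p B > 0" "B \<subseteq> {..<n}" "card B = r" "finite B"
proof -
  have "p B \<noteq> 0" using assms unfolding bases_def by auto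
  then show "p B > 0" "B \<subseteq> {..<n}" "card B = r"
    using nonneg[of B] support by (auto simp: less_le)
  then show "finite B" using finite_subset by blast
qed

lemma base_weight_nonneg: "W X \<ge> 0"
  unfolding base_weight_def using nonneg by (intro sum_nonneg) auto

lemma base_weight_pos_iff: "W X > 0 \<longleftrightarrow> (\<exists>B\<in>bases n p. X \<subseteq> B)"
proof
  assume "W X > 0"
  then show "\<exists>B\<in>bases n p. X \<subseteq> B"
    unfolding base_weight_def by (metis (no_types, lifting) empty_Collect_eq less_irrefl sum.empty)
next
  assume "\<exists>B\<in>bases n p. X \<subseteq> B"
  then obtain B where B: "B \<in> bases n p" "X \<subseteq> B" by auto
  have "p B \<le> W X"
    unfolding base_weight_def using B finite_bases nonneg by (intro member_le_sum) auto
  then show "W X > 0" using basesD(1)[OF B(1)] by simp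
qed

lemma base_weight_antimono: "X \<subseteq> Y \<Longrightarrow> W Y \<le> W X"
  unfolding base_weight_def using finite_bases nonneg by (intro sum_mono2) auto

lemma indep_iff: "I \<in> indep m \<longleftrightarrow> I \<in> level m \<and> W I > 0"
  unfolding indep_k_def level_def base_weight_pos_iff using basesD(2) by blast

lemma finite_indep [simp]: "finite (indep m)"
  using finite_subset[of "indep m" "level m"] indep_iff by auto

lemma weight_eq: "weight n r p I = fact (r - card I) * W I"
proof (cases "\<exists>B\<in>bases n p. I \<subseteq> B")
  case False
  then have empty: "{B\<in>bases n p. I \<subseteq> B} = {}" by auto
  show ?thesis using False unfolding weight_def base_weight_def empty by simp
qed (simp add: weight_def base_weight_def)

lemma sum_base_weight_insert:
  assumes "X \<subseteq> {..<n}"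
  shows "(\<Sum>e\<in>{..<n} - X. W (insert e X)) = real (r - card X) * W X"
proof -
  have "(\<Sum>e\<in>{..<n} - X. W (insert e X)) = (\<Sum>B\<in>bases n p. \<Sum>e\<in>{..<n} - X. if insert e X \<subseteq> B then p B else 0)"
    unfolding base_weight_def using finite_bases
    by (simp add: sum.inter_filter) (rule sum.swap)
  also have "\<dots> = (\<Sum>B\<in>bases n p. if X \<subseteq> B then real (r - card X) * p B else 0)"
  proof (rule sum.cong[OF refl])
    fix B assume B: "B \<in> bases n p"
    have "(\<Sum>e\<in>{..<n} - X. if insert e X \<subseteq> B then p B else 0) = real (card {e\<in>{..<n} - X. insert e X \<subseteq> B}) * p B"
      by (simp add: sum.inter_filter[symmetric])
    moreover have "{e\<in>{..<n} - X. insert e X \<subseteq> B} = (if X \<subseteq> B then B - X else {})"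
      using basesD(2)[OF B] by auto
    moreover have "X \<subseteq> B \<Longrightarrow> card (B - X) = r - card X"
      using basesD(3,4)[OF B] by (simp add: card_Diff_subset finite_subset)
    ultimately show "(\<Sum>e\<in>{..<n} - X. if insert e X \<subseteq> B then p B else 0) = (if X \<subseteq> B then real (r - card X) * p B else 0)"
      by auto
  qed
  also have "\<dots> = real (r - card X) * W X"
    unfolding base_weight_def using finite_bases by (auto simp: sum.inter_filter sum_distrib_left intro!: sum.cong)
  finally show ?thesis .
qed

lemma sum_level_insert:
  "(\<Sum>I\<in>level m. \<Sum>e\<in>{..<n} - I. F I e) = (\<Sum>K\<in>level (Suc m). \<Sum>e\<in>K. F (K - {e}) e)"
proof -
  have "(\<Sum>I\<in>level m. \<Sum>e\<in>{..<n} - I. F I e) = (\<Sum>(I, e)\<in>Sigma (level m) (\<lambda>I. {..<n} - I). F I e)"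
    by (simp add: sum.Sigma)
  also have "\<dots> = (\<Sum>(K, e)\<in>Sigma (level (Suc m)) (\<lambda>K. K). F (K - {e}) e)"
  proof (rule sum.reindex_bij_witness[where i = "\<lambda>(K, e). (K - {e}, e)" and j = "\<lambda>(I, e). (insert e I, e)"])
  qed (auto simp: insert_in_level remove_in_level insert_absorb dest: level_subset)
  also have "\<dots> = (\<Sum>K\<in>level (Suc m). \<Sum>e\<in>K. F (K - {e}) e)"
    by (simp add: sum.Sigma level_finite)
  finally show ?thesis .
qed

definition level_mass :: "nat \<Rightarrow> real" where
  "level_mass m = (\<Sum>I\<in>level m. W I)"

definition level_dist :: "nat \<Rightarrow> nat set \<Rightarrow> real" where
  "level_dist m I = W I / level_mass m"

(* Meaningful for I in indep m with m < r only; otherwise the denominator vanishes and the value is 0. *)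
definition sup_avg :: "nat \<Rightarrow> (nat set \<Rightarrow> real) \<Rightarrow> nat set \<Rightarrow> real" where
  "sup_avg m g I = (\<Sum>e\<in>{..<n} - I. W (insert e I) * g (insert e I)) / (real (r - m) * W I)"

definition sub_avg :: "nat \<Rightarrow> (nat set \<Rightarrow> real) \<Rightarrow> nat set \<Rightarrow> real" where
  "sub_avg m f K = (\<Sum>e\<in>K. f (K - {e})) / real (Suc m)"

lemma indep_nonempty:
  assumes "m \<le> r"
  obtains I where "I \<in> indep m"
proof -
  obtain B where B: "B \<in> bases n p" using bases_nonempty by auto
  obtain I where "I \<subseteq> B" "card I = m"
    using obtain_subset_with_card_n[of m B] basesD(3)[OF B] assms by auto
  then have "I \<in> indep m" unfolding indep_k_def using B by auto
  then show ?thesis by (rule that)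
qed

lemma level_mass_pos: "m \<le> r \<Longrightarrow> level_mass m > 0"
proof -
  assume "m \<le> r"
  then obtain I where "I \<in> indep m" by (rule indep_nonempty)
  then have "I \<in> level m" "W I > 0" using indep_iff by auto
  moreover have "W I \<le> level_mass m"
    unfolding level_mass_def using calculation base_weight_nonneg by (intro member_le_sum) auto
  ultimately show ?thesis by simp
qed

lemma level_mass_Suc: "real (Suc m) * level_mass (Suc m) = real (r - m) * level_mass m"
proof -
  have "(\<Sum>K\<in>level (Suc m). real (Suc m) * W K) = (\<Sum>K\<in>level (Suc m). \<Sum>e\<in>K. W (insert e (K - {e})))"
    by (intro sum.cong refl) (simp add: insert_absorb level_card)
  also have "\<dots> = (\<Sum>I\<in>level m. \<Sum>e\<in>{..<n} - I. W (insert e I))"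
    by (rule sum_level_insert[symmetric])
  also have "\<dots> = (\<Sum>I\<in>level m. real (r - m) * W I)"
    by (intro sum.cong refl) (simp add: sum_base_weight_insert level_subset level_card)
  finally show ?thesis
    unfolding level_mass_def by (simp add: sum_distrib_left)
qed

lemma level_dist_nonneg: "level_dist m I \<ge> 0"
  unfolding level_dist_def level_mass_def using base_weight_nonneg by (simp add: sum_nonneg)

lemma sum_level_dist_indep: "(\<Sum>I\<in>level m. level_dist m I * F I) = (\<Sum>I\<in>indep m. level_dist m I * F I)"
  using base_weight_nonneg by (intro sum.mono_neutral_right) (auto simp: indep_iff level_dist_def less_le)

lemma sum_level_dist: "m \<le> r \<Longrightarrow> (\<Sum>I\<in>level m. level_dist m I) = 1"
  using level_mass_pos[of m] unfolding level_dist_def level_mass_def by (simp add: sum_divide_distrib[symmetric])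

lemma sum_insert_eq_sup_avg:
  assumes "I \<in> level m"
  shows "(\<Sum>e\<in>{..<n} - I. W (insert e I) * g (insert e I)) = real (r - m) * W I * sup_avg m g I"
proof (cases "real (r - m) * W I = 0")
  case True
  then have "(\<Sum>e\<in>{..<n} - I. W (insert e I)) = 0"
    using sum_base_weight_insert[OF level_subset[OF assms]] level_card[OF assms] by simp
  then have "W (insert e I) = 0" if "e \<in> {..<n} - I" for e
    using that base_weight_nonneg by (subst (asm) sum_nonneg_eq_0_iff) auto
  then show ?thesis using True by simp
qed (simp add: sup_avg_def)

lemma sub_avg_adjoint:
  assumes "m < r"
  shows "(\<Sum>K\<in>level (Suc m). level_dist (Suc m) K * g K * sub_avg m f K)
    = (\<Sum>I\<in>level m. level_dist m I * sup_avg m g I * f I)"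
proof -
  have "(\<Sum>K\<in>level (Suc m). W K * g K * sub_avg m f K)
      = (\<Sum>K\<in>level (Suc m). \<Sum>e\<in>K. W (insert e (K - {e})) * g (insert e (K - {e})) * f (K - {e}) / real (Suc m))"
    unfolding sub_avg_def by (intro sum.cong refl) (simp add: insert_absorb sum_distrib_left sum_divide_distrib)
  also have "\<dots> = (\<Sum>I\<in>level m. \<Sum>e\<in>{..<n} - I. W (insert e I) * g (insert e I) * f I / real (Suc m))"
    by (rule sum_level_insert[symmetric])
  also have "\<dots> = (\<Sum>I\<in>level m. (\<Sum>e\<in>{..<n} - I. W (insert e I) * g (insert e I)) * f I) / real (Suc m)"
    by (simp add: sum_distrib_right sum_divide_distrib)
  also have "\<dots> = (\<Sum>I\<in>level m. real (r - m) * (W I * sup_avg m g I * f I)) / real (Suc m)"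
    by (intro arg_cong[where f = "\<lambda>x. x / _"] sum.cong refl) (simp add: sum_insert_eq_sup_avg)
  also have "\<dots> = real (r - m) / real (Suc m) * (\<Sum>I\<in>level m. W I * sup_avg m g I * f I)"
    by (simp add: sum_distrib_left[symmetric])
  finally have unnormalized: "(\<Sum>K\<in>level (Suc m). W K * g K * sub_avg m f K)
      = real (r - m) / real (Suc m) * (\<Sum>I\<in>level m. W I * sup_avg m g I * f I)" .
  have ratio: "real (r - m) / (real (Suc m) * level_mass (Suc m)) = 1 / level_mass m"
    using assms level_mass_pos[of m] unfolding level_mass_Suc by simp
  have "(\<Sum>K\<in>level (Suc m). level_dist (Suc m) K * g K * sub_avg m f K)
      = (\<Sum>K\<in>level (Suc m). W K * g K * sub_avg m f K) / level_mass (Suc m)"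
    unfolding level_dist_def by (simp add: sum_divide_distrib)
  also have "\<dots> = (\<Sum>I\<in>level m. W I * sup_avg m g I * f I) * (real (r - m) / (real (Suc m) * level_mass (Suc m)))"
    unfolding unnormalized by simp
  also have "\<dots> = (\<Sum>I\<in>level m. level_dist m I * sup_avg m g I * f I)"
    unfolding ratio level_dist_def by (simp add: sum_divide_distrib)
  finally show ?thesis .
qed

lemma sup_avg_const:
  assumes "I \<in> indep m" "m < r"
  shows "sup_avg m (\<lambda>_. c) I = c"
proof -
  have "I \<in> level m" using assms(1) by (simp add: indep_iff)
  then have "(\<Sum>e\<in>{..<n} - I. W (insert e I)) = real (r - m) * W I"
    using sum_base_weight_insert level_subset level_card by simp
  then have "(\<Sum>e\<in>{..<n} - I. W (insert e I) * c) = c * (real (r - m) * W I)"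
    by (metis sum_distrib_right mult.commute)
  then show ?thesis
    unfolding sup_avg_def using assms by (simp add: indep_iff)
qed

lemma sub_avg_const: "K \<in> level (Suc m) \<Longrightarrow> sub_avg m (\<lambda>_. c) K = c"
  unfolding sub_avg_def by (simp add: level_card)

lemma mean_sup_avg:
  assumes "m < r"
  shows "(\<Sum>I\<in>level m. level_dist m I * sup_avg m g I) = (\<Sum>K\<in>level (Suc m). level_dist (Suc m) K * g K)"
  using sub_avg_adjoint[OF assms, of g "\<lambda>_. 1"] by (simp add: sub_avg_const)

lemma mean_sub_avg:
  assumes "m < r"
  shows "(\<Sum>K\<in>level (Suc m). level_dist (Suc m) K * sub_avg m f K) = (\<Sum>I\<in>level m. level_dist m I * f I)"
proof -
  have "(\<Sum>K\<in>level (Suc m). level_dist (Suc m) K * sub_avg m f K)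
      = (\<Sum>I\<in>indep m. level_dist m I * sup_avg m (\<lambda>_. 1) I * f I)"
    using sub_avg_adjoint[OF assms, of "\<lambda>_. 1" f] sum_level_dist_indep[of m "\<lambda>I. sup_avg m (\<lambda>_. 1) I * f I"]
    by (simp add: mult.assoc)
  also have "\<dots> = (\<Sum>I\<in>level m. level_dist m I * f I)"
    using assms by (simp add: sup_avg_const sum_level_dist_indep)
  finally show ?thesis .
qed

lemma insert_in_indep:
  assumes "I \<in> indep m" "m < r"
  obtains e where "e \<in> {..<n} - I" "insert e I \<in> indep (Suc m)"
proof -
  obtain B where B: "B \<in> bases n p" "I \<subseteq> B"
    using assms(1) unfolding indep_k_def by auto
  have "card I < card B"
    using assms basesD(3)[OF B(1)] unfolding indep_k_def by auto
  then obtain e where "e \<in> B" "e \<notin> I"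
    using B(2) by (metis card_mono basesD(4)[OF B(1)] not_le subsetI subset_antisym)
  moreover have "insert e I \<in> level (Suc m)"
    using assms(1) calculation basesD(2)[OF B(1)] by (intro insert_in_level) (auto simp: indep_iff)
  ultimately show ?thesis
    using that B basesD(2)[OF B(1)] by (auto simp: indep_iff base_weight_pos_iff)
qed

lemma remove_in_indep: "K \<in> indep (Suc m) \<Longrightarrow> e \<in> K \<Longrightarrow> K - {e} \<in> indep m"
  using base_weight_antimono[of "K - {e}" K] by (auto simp: indep_iff remove_in_level)

lemma sup_avg_pos:
  assumes "m < r" and g: "\<And>K. K \<in> indep (Suc m) \<Longrightarrow> g K > 0" and I: "I \<in> indep m"
  shows "sup_avg m g I > 0"
proof -
  obtain e0 where e0: "e0 \<in> {..<n} - I" "insert e0 I \<in> indep (Suc m)"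
    using insert_in_indep[OF I assms(1)] .
  have "W (insert e I) * g (insert e I) \<ge> 0" if "e \<in> {..<n} - I" for e
    using g[of "insert e I"] base_weight_nonneg[of "insert e I"] insert_in_level[OF _ that] I
    by (cases "W (insert e I) > 0") (auto simp: indep_iff less_le)
  moreover have "W (insert e0 I) * g (insert e0 I) > 0"
    using e0 g by (simp add: indep_iff)
  ultimately have "(\<Sum>e\<in>{..<n} - I. W (insert e I) * g (insert e I)) > 0"
    using e0(1) by (intro sum_pos2[of _ e0]) auto
  then show ?thesis
    unfolding sup_avg_def using I assms(1) by (simp add: indep_iff)
qed

lemma sup_avg_nonneg:
  assumes "m < r" and g: "\<And>K. K \<in> indep (Suc m) \<Longrightarrow> g K > 0" and I: "I \<in> level m"
  shows "sup_avg m g I \<ge> 0"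
proof (cases "W I > 0")
  case True
  then show ?thesis
    using sup_avg_pos[OF assms(1) g, where I = I] I by (simp add: indep_iff less_imp_le)
next
  case False
  then have "W I = 0" using base_weight_nonneg[of I] by simp
  then show ?thesis unfolding sup_avg_def by simp
qed

lemma sub_avg_pos:
  assumes f: "\<And>I. I \<in> indep m \<Longrightarrow> f I > 0" and K: "K \<in> indep (Suc m)"
  shows "sub_avg m f K > 0"
proof -
  have "K \<noteq> {}" "finite K"
    using K by (auto simp: indep_iff level_finite dest: level_card)
  then have "(\<Sum>e\<in>K. f (K - {e})) > 0"
    using f remove_in_indep[OF K] by (intro sum_pos) auto
  then show ?thesis unfolding sub_avg_def by simp
qed

abbreviation ent :: "nat \<Rightarrow> (nat set \<Rightarrow> real) \<Rightarrow> real" where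
  "ent m \<equiv> entropy (level m) (level_dist m)"

lemma entropy_sub_avg_le:
  assumes "m < r" and f: "\<And>I. I \<in> indep m \<Longrightarrow> f I > 0"
  shows "ent (Suc m) (sub_avg m f) \<le> ent m f"
proof -
  have "level_dist (Suc m) K * xlnx (sub_avg m f K) \<le> level_dist (Suc m) K * sub_avg m (\<lambda>I. xlnx (f I)) K"
    if K: "K \<in> level (Suc m)" for K
  proof (cases "W K > 0")
    case True
    then have "K \<in> indep (Suc m)" using K by (simp add: indep_iff)
    then have f_pos: "f (K - {e}) > 0" if "e \<in> K" for e
      using f remove_in_indep that by blast
    have "K \<noteq> {}" "finite K" "card K = Suc m"
      using K by (auto simp: level_finite dest: level_card)
    then have "xlnx (\<Sum>e\<in>K. 1 / real (Suc m) * f (K - {e})) \<le> (\<Sum>e\<in>K. 1 / real (Suc m) * xlnx (f (K - {e})))"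
      using f_pos by (intro xlnx_jensen) (auto intro!: sum_pos simp: less_imp_le)
    then have "xlnx (sub_avg m f K) \<le> sub_avg m (\<lambda>I. xlnx (f I)) K"
      unfolding sub_avg_def by (simp add: sum_divide_distrib[symmetric] sum_distrib_left[symmetric])
    then show ?thesis
      using level_dist_nonneg by (intro mult_left_mono) auto
  next
    case False
    then have "W K = 0" using base_weight_nonneg[of K] by simp
    then show ?thesis by (simp add: level_dist_def)
  qed
  then have "(\<Sum>K\<in>level (Suc m). level_dist (Suc m) K * xlnx (sub_avg m f K))
      \<le> (\<Sum>K\<in>level (Suc m). level_dist (Suc m) K * sub_avg m (\<lambda>I. xlnx (f I)) K)"
    by (rule sum_mono)
  also have "\<dots> = (\<Sum>I\<in>level m. level_dist m I * xlnx (f I))"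
    by (rule mean_sub_avg[OF assms(1)])
  finally have "(\<Sum>K\<in>level (Suc m). level_dist (Suc m) K * xlnx (sub_avg m f K))
      \<le> (\<Sum>I\<in>level m. level_dist m I * xlnx (f I))" .
  then show ?thesis
    unfolding entropy_xlnx mean_sub_avg[OF assms(1)] by simp
qed

section \<open>Convexity of the entropy along the levels\<close>

lemma link_hess_eq_0: "e \<in> s \<Longrightarrow> link_hess n p s e f = 0"
  unfolding link_hess_def by auto

lemma link_hess_row_sum:
  assumes "e \<notin> s"
  shows "(\<Sum>f<n. link_hess n p s e f * H f) = (\<Sum>f\<in>{..<n} - insert e s. W (insert f (insert e s)) * H f)"
  using assms unfolding link_hess_def
  by (intro sum.mono_neutral_cong_right) (auto simp: insert_commute)

lemma link_hess_row_sums: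
  assumes s: "s \<in> level k" and e: "e \<in> {..<n} - s"
  shows "(\<Sum>f<n. link_hess n p s e f) = real (r - Suc k) * W (insert e s)"
    and "(\<Sum>f<n. link_hess n p s e f * G (insert e (insert f s)))
      = real (r - Suc k) * W (insert e s) * sup_avg (Suc k) G (insert e s)"
proof -
  have es: "insert e s \<in> level (Suc k)" by (rule insert_in_level[OF s e])
  show "(\<Sum>f<n. link_hess n p s e f) = real (r - Suc k) * W (insert e s)"
    using link_hess_row_sum[of e s "\<lambda>_. 1"] e sum_base_weight_insert[OF level_subset[OF es]]
    by (simp add: level_card[OF es])
  have "(\<Sum>f<n. link_hess n p s e f * G (insert e (insert f s)))
      = (\<Sum>f\<in>{..<n} - insert e s. W (insert f (insert e s)) * G (insert f (insert e s)))"
    using link_hess_row_sum[of e s] e by (simp add: insert_commute)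
  then show "(\<Sum>f<n. link_hess n p s e f * G (insert e (insert f s)))
      = real (r - Suc k) * W (insert e s) * sup_avg (Suc k) G (insert e s)"
    by (simp add: sum_insert_eq_sup_avg[OF es])
qed

lemma link_entropy_inequality:
  assumes s: "s \<in> level k" and "k + 2 \<le> r" and G: "\<And>K. K \<in> indep (Suc (Suc k)) \<Longrightarrow> G K > 0"
  shows "2 * real (r - Suc k) * (\<Sum>e\<in>{..<n} - s. W (insert e s) * xlnx (sup_avg (Suc k) G (insert e s)))
    \<le> (\<Sum>e\<in>{..<n} - s. \<Sum>f\<in>{..<n} - insert e s. W (insert f (insert e s)) * xlnx (G (insert f (insert e s))))
      + real (r - k) * real (r - Suc k) * (W s * xlnx (sup_avg k (sup_avg (Suc k) G) s))"
proof (cases "W s > 0")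
  case False
  then have "W s = 0" using base_weight_nonneg[of s] by simp
  then have "W X = 0" if "s \<subseteq> X" for X
    using base_weight_antimono[OF that] base_weight_nonneg[of X] by simp
  then have "W (insert e s) = 0" "W (insert f (insert e s)) = 0" for e f
    by (meson subset_insertI subset_insertI2)+
  then show ?thesis using \<open>W s = 0\<close> by simp
next
  case True
  define c where "c = real (r - Suc k)"
  define D where "D = sup_avg (Suc k) G"
  define Q where "Q = link_hess n p s"
  define h where "h e f = G (insert e (insert f s))" for e f
  define z where "z e = (if e \<in> s then 0 else D (insert e s))" for e
    \<comment> \<open>the rows of \<open>Q\<close> indexed by \<open>e \<in> s\<close> vanish, so \<open>z\<close> is arbitrary there\<close>
  have "c > 0" unfolding c_def using \<open>k + 2 \<le> r\<close> by simp
  have s_level: "s \<subseteq> {..<n}" "card s = k" "finite s"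
    using s by (auto simp: level_subset level_card level_finite)
  have restrict: "(\<Sum>e<n. F e) = (\<Sum>e\<in>{..<n} - s. F e)" if "\<And>e. e \<in> s \<Longrightarrow> F e = 0" for F :: "nat \<Rightarrow> real"
    using that by (intro sum.mono_neutral_right) auto
  have Q_zero: "e \<in> s \<Longrightarrow> Q e f = 0" for e f
    unfolding Q_def by (rule link_hess_eq_0)
  have row: "(\<Sum>f<n. Q e f) = c * W (insert e s)"
    and row_h: "(\<Sum>f<n. Q e f * h e f) = c * W (insert e s) * D (insert e s)"
    and row_G: "(\<Sum>f<n. Q e f * xlnx (h e f))
      = (\<Sum>f\<in>{..<n} - insert e s. W (insert f (insert e s)) * xlnx (G (insert f (insert e s))))"
    if e: "e \<in> {..<n} - s" for e
    using link_hess_row_sums[OF s e] link_hess_row_sum[of e s] e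
    unfolding Q_def h_def c_def D_def by (simp_all add: insert_commute)
  have total: "(\<Sum>e<n. \<Sum>f<n. Q e f) = c * (real (r - k) * W s)"
    using sum_base_weight_insert[OF s_level(1)] s_level(2)
    by (simp add: restrict Q_zero row sum_distrib_left[symmetric])
  have total_h: "(\<Sum>e<n. \<Sum>f<n. Q e f * h e f) = c * (real (r - k) * W s * sup_avg k D s)"
    using sum_insert_eq_sup_avg[OF s, of D]
    by (simp add: restrict Q_zero row_h sum_distrib_left[symmetric] mult.assoc)
  have "2 * (\<Sum>e<n. (\<Sum>f<n. Q e f) * xlnx (z e))
      \<le> (\<Sum>e<n. \<Sum>f<n. Q e f * xlnx (h e f))
        + (\<Sum>e<n. \<Sum>f<n. Q e f) * xlnx ((\<Sum>e<n. \<Sum>f<n. Q e f * h e f) / (\<Sum>e<n. \<Sum>f<n. Q e f))"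
  proof (rule local_entropy_inequality[where b = "link_grad n p s" and c = "W s"])
    show "\<And>e f. e \<in> {..<n} \<Longrightarrow> f \<in> {..<n} \<Longrightarrow> Q e f > 0 \<Longrightarrow> h e f > 0"
      unfolding Q_def h_def link_hess_def using s_level
      by (auto intro!: G simp: indep_iff level_def split: if_splits)
    show "(\<Sum>e<n. \<Sum>f<n. Q e f) > 0"
      unfolding total using \<open>c > 0\<close> True \<open>k + 2 \<le> r\<close> by simp
    show "z e \<ge> 0" if "e \<in> {..<n}" for e
      unfolding z_def D_def using that \<open>k + 2 \<le> r\<close> G insert_in_level[OF s]
      by (auto intro: sup_avg_nonneg)
    show "(\<Sum>f<n. Q e f) * z e = (\<Sum>f<n. Q e f * h e f)" if "e \<in> {..<n}" for e
      using that row row_h Q_zero unfolding z_def by auto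
  qed (use link_lc[OF s_level(1) True] True in \<open>auto simp: Q_def h_def link_hess_def base_weight_nonneg insert_commute\<close>)
  moreover have "(\<Sum>e<n. (\<Sum>f<n. Q e f) * xlnx (z e))
      = c * (\<Sum>e\<in>{..<n} - s. W (insert e s) * xlnx (D (insert e s)))"
    by (simp add: restrict Q_zero row z_def sum_distrib_left mult.assoc)
  moreover have "(\<Sum>e<n. \<Sum>f<n. Q e f * xlnx (h e f))
      = (\<Sum>e\<in>{..<n} - s. \<Sum>f\<in>{..<n} - insert e s. W (insert f (insert e s)) * xlnx (G (insert f (insert e s))))"
    by (simp add: restrict Q_zero row_G)
  moreover have "(\<Sum>e<n. \<Sum>f<n. Q e f) * xlnx ((\<Sum>e<n. \<Sum>f<n. Q e f * h e f) / (\<Sum>e<n. \<Sum>f<n. Q e f))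
      = real (r - k) * c * (W s * xlnx (sup_avg k D s))"
    unfolding total total_h using \<open>c > 0\<close> True \<open>k + 2 \<le> r\<close> by (simp add: xlnx_def)
  ultimately show ?thesis
    unfolding c_def D_def by (simp add: mult.assoc)
qed

lemma sum_level_insert_set:
  "(\<Sum>I\<in>level m. \<Sum>e\<in>{..<n} - I. F (insert e I)) = real (Suc m) * (\<Sum>K\<in>level (Suc m). F K)"
proof -
  have "(\<Sum>I\<in>level m. \<Sum>e\<in>{..<n} - I. F (insert e I)) = (\<Sum>K\<in>level (Suc m). \<Sum>e\<in>K. F (insert e (K - {e})))"
    by (rule sum_level_insert)
  also have "\<dots> = (\<Sum>K\<in>level (Suc m). real (Suc m) * F K)"
    by (intro sum.cong refl) (simp add: insert_absorb level_card)
  finally show ?thesis by (simp add: sum_distrib_left)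
qed

definition level_xlnx :: "nat \<Rightarrow> (nat set \<Rightarrow> real) \<Rightarrow> real" where
  "level_xlnx m g = (\<Sum>I\<in>level m. W I * xlnx (g I))"

lemma entropy_level_xlnx:
  "ent m g = level_xlnx m g / level_mass m - xlnx (\<Sum>I\<in>level m. level_dist m I * g I)"
  unfolding entropy_xlnx level_xlnx_def level_dist_def by (simp add: sum_divide_distrib sum_distrib_right)

lemma sum_link_entropy_inequality:
  assumes "k + 2 \<le> r" and G: "\<And>K. K \<in> indep (Suc (Suc k)) \<Longrightarrow> G K > 0"
  shows "2 * real (r - Suc k) * (real (Suc k) * level_xlnx (Suc k) (sup_avg (Suc k) G))
    \<le> real (Suc k) * (real (Suc (Suc k)) * level_xlnx (Suc (Suc k)) G)
      + real (r - k) * real (r - Suc k) * level_xlnx k (sup_avg k (sup_avg (Suc k) G))"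
proof -
  define G1 where "G1 = sup_avg (Suc k) G"
  have "(\<Sum>s\<in>level k. 2 * real (r - Suc k) * (\<Sum>e\<in>{..<n} - s. W (insert e s) * xlnx (G1 (insert e s))))
      \<le> (\<Sum>s\<in>level k. (\<Sum>e\<in>{..<n} - s. \<Sum>f\<in>{..<n} - insert e s. W (insert f (insert e s)) * xlnx (G (insert f (insert e s))))
        + real (r - k) * real (r - Suc k) * (W s * xlnx (sup_avg k G1 s)))"
    using link_entropy_inequality[where G = G, OF _ assms(1) G] unfolding G1_def by (intro sum_mono) simp
  moreover have "(\<Sum>s\<in>level k. 2 * real (r - Suc k) * (\<Sum>e\<in>{..<n} - s. W (insert e s) * xlnx (G1 (insert e s))))
      = 2 * real (r - Suc k) * (real (Suc k) * level_xlnx (Suc k) G1)"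
    unfolding level_xlnx_def using sum_level_insert_set[where F = "\<lambda>K. W K * xlnx (G1 K)" and m = k]
    by (simp add: sum_distrib_left[symmetric])
  moreover have "(\<Sum>s\<in>level k. \<Sum>e\<in>{..<n} - s. \<Sum>f\<in>{..<n} - insert e s. W (insert f (insert e s)) * xlnx (G (insert f (insert e s))))
      = real (Suc k) * (real (Suc (Suc k)) * level_xlnx (Suc (Suc k)) G)"
    unfolding level_xlnx_def sum_level_insert_set[where F = "\<lambda>K. \<Sum>f\<in>{..<n} - K. W (insert f K) * xlnx (G (insert f K))"]
    using sum_level_insert_set[where F = "\<lambda>K. W K * xlnx (G K)" and m = "Suc k"] by simp
  ultimately show ?thesis
    unfolding G1_def level_xlnx_def by (simp add: sum.distrib sum_distrib_left)
qed

lemma entropy_sup_avg_convex: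
  assumes "k + 2 \<le> r" and G: "\<And>K. K \<in> indep (Suc (Suc k)) \<Longrightarrow> G K > 0"
  shows "2 * ent (Suc k) (sup_avg (Suc k) G) \<le> ent k (sup_avg k (sup_avg (Suc k) G)) + ent (Suc (Suc k)) G"
proof -
  define X0 X1 X2 where "X0 = level_xlnx k (sup_avg k (sup_avg (Suc k) G))"
    and "X1 = level_xlnx (Suc k) (sup_avg (Suc k) G)" and "X2 = level_xlnx (Suc (Suc k)) G"
  define Z0 Z1 Z2 where "Z0 = level_mass k" and "Z1 = level_mass (Suc k)" and "Z2 = level_mass (Suc (Suc k))"
  define c d where "c = real (r - Suc k)" and "d = real (r - k)"
  have "c > 0" "d > 0" "Z0 > 0" "Z1 > 0" "Z2 > 0"
    unfolding c_def d_def Z0_def Z1_def Z2_def using assms(1) level_mass_pos by auto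
  have Z01: "d * c * Z0 = c * (real (Suc k) * Z1)"
    unfolding Z0_def Z1_def d_def level_mass_Suc by simp
  also have "\<dots> = real (Suc k) * (real (Suc (Suc k)) * Z2)"
    unfolding Z1_def Z2_def c_def using level_mass_Suc[of "Suc k"] by simp
  finally have Z02: "d * c * Z0 = real (Suc k) * (real (Suc (Suc k)) * Z2)" .
  have "2 * c * (real (Suc k) * X1) / (d * c * Z0) \<le> (real (Suc k) * (real (Suc (Suc k)) * X2) + d * c * X0) / (d * c * Z0)"
    using sum_link_entropy_inequality[OF assms] \<open>c > 0\<close> \<open>d > 0\<close> \<open>Z0 > 0\<close>
    unfolding X0_def X1_def X2_def c_def d_def by (intro divide_right_mono) (auto simp: mult_ac)
  also have "\<dots> = real (Suc k) * (real (Suc (Suc k)) * X2) / (d * c * Z0) + X0 / Z0"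
    using \<open>c > 0\<close> \<open>d > 0\<close> \<open>Z0 > 0\<close> by (simp add: add_divide_distrib)
  finally have "2 * c * (real (Suc k) * X1) / (d * c * Z0)
      \<le> real (Suc k) * (real (Suc (Suc k)) * X2) / (d * c * Z0) + X0 / Z0" .
  moreover have "2 * c * (real (Suc k) * X1) / (d * c * Z0) = 2 * (X1 / Z1)"
    using \<open>c > 0\<close> \<open>Z1 > 0\<close> unfolding Z01 by simp
  moreover have "real (Suc k) * (real (Suc (Suc k)) * X2) / (d * c * Z0) = X2 / Z2"
    using \<open>Z2 > 0\<close> unfolding Z02 by simp
  ultimately have "2 * (X1 / Z1) \<le> X0 / Z0 + X2 / Z2"
    by simp
  moreover have "(\<Sum>I\<in>level k. level_dist k I * sup_avg k (sup_avg (Suc k) G) I)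
      = (\<Sum>K\<in>level (Suc k). level_dist (Suc k) K * sup_avg (Suc k) G K)"
    "(\<Sum>I\<in>level (Suc k). level_dist (Suc k) I * sup_avg (Suc k) G I)
      = (\<Sum>K\<in>level (Suc (Suc k)). level_dist (Suc (Suc k)) K * G K)"
    using mean_sup_avg assms(1) by auto
  ultimately show ?thesis
    unfolding entropy_level_xlnx X0_def X1_def X2_def Z0_def Z1_def Z2_def by simp
qed

primrec sup_avg_iter :: "nat \<Rightarrow> (nat set \<Rightarrow> real) \<Rightarrow> nat \<Rightarrow> nat set \<Rightarrow> real" where
  "sup_avg_iter j g 0 = g"
| "sup_avg_iter j g (Suc t) = sup_avg (j - Suc t) (sup_avg_iter j g t)"

lemma sup_avg_iter_pos:
  assumes "j \<le> r" and g: "\<And>K. K \<in> indep j \<Longrightarrow> g K > 0"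
  shows "t \<le> j \<Longrightarrow> I \<in> indep (j - t) \<Longrightarrow> sup_avg_iter j g t I > 0"
proof (induction t arbitrary: I)
  case (Suc t)
  then have "\<And>K. K \<in> indep (Suc (j - Suc t)) \<Longrightarrow> sup_avg_iter j g t K > 0"
    by (simp add: Suc_diff_Suc)
  with Suc.prems assms(1) show ?case
    by (simp add: sup_avg_pos)
qed (use g in simp)

lemma entropy_level_0: "ent 0 g = 0"
proof -
  have "level 0 = {{}}"
    unfolding level_def by (auto simp: card_eq_0_iff intro: finite_subset)
  moreover have "level_dist 0 {} = 1"
    using sum_level_dist[of 0] calculation by simp
  ultimately show ?thesis
    unfolding entropy_def by simp
qed

lemma entropy_sup_avg_contraction:
  assumes "1 \<le> j" "j \<le> r" and g: "\<And>K. K \<in> indep j \<Longrightarrow> g K > 0"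
  shows "real j * ent (j - 1) (sup_avg (j - 1) g) \<le> real (j - 1) * ent j g"
proof -
  define E where "E i = ent i (sup_avg_iter j g (j - i))" for i
  have iter_Suc: "sup_avg_iter j g (j - i) = sup_avg i (sup_avg_iter j g (j - Suc i))" if "i < j" for i
  proof -
    have "j - i = Suc (j - Suc i)" using that by simp
    then show ?thesis using that by simp
  qed
  have "2 * E (Suc i) \<le> E i + E (Suc (Suc i))" if "i + 2 \<le> j" for i
  proof -
    define G where "G = sup_avg_iter j g (j - Suc (Suc i))"
    have "\<And>K. K \<in> indep (Suc (Suc i)) \<Longrightarrow> G K > 0"
      unfolding G_def using sup_avg_iter_pos[OF assms(2) g, where t = "j - Suc (Suc i)"] that by simp
    moreover have "sup_avg_iter j g (j - Suc i) = sup_avg (Suc i) G"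
      unfolding G_def using iter_Suc[of "Suc i"] that by simp
    moreover have "sup_avg_iter j g (j - i) = sup_avg i (sup_avg (Suc i) G)"
      using iter_Suc[of i] calculation(2) that by simp
    ultimately show ?thesis
      unfolding E_def G_def[symmetric] using entropy_sup_avg_convex[of i G] that assms(2) by simp
  qed
  then have "real (Suc (j - 1)) * E (j - 1) \<le> real (j - 1) * E (Suc (j - 1))"
    using assms(1) by (intro convex_seq_ratio_le[of E j]) (auto simp: E_def entropy_level_0)
  moreover have "E (j - 1) = ent (j - 1) (sup_avg (j - 1) g)"
    unfolding E_def using iter_Suc[of "j - 1"] assms(1) by simp
  ultimately show ?thesis
    using assms(1) by (simp add: E_def)
qed

section \<open>The down-up and up-down walks\<close>

lemma weight_ratio:
  assumes "card J = Suc m" "card J' = m" "m < r"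
  shows "weight n r p J / (a * weight n r p J') = W J / (a * real (r - m) * W J')"
proof -
  have "r - m = Suc (r - Suc m)" using assms(3) by simp
  then have "(fact (r - m) :: real) = real (r - m) * fact (r - Suc m)" by simp
  then show ?thesis
    unfolding weight_eq assms(1,2) by simp
qed

definition exchanges :: "nat set \<Rightarrow> nat set set" where
  "exchanges I = (\<lambda>(x, e). insert e (I - {x})) ` (I \<times> ({..<n} - I))"

lemma sum_exchanges:
  "(\<Sum>J\<in>exchanges I. G J) = (\<Sum>x\<in>I. \<Sum>e\<in>{..<n} - I. G (insert e (I - {x})))"
proof -
  have "inj_on (\<lambda>(x, e). insert e (I - {x})) (I \<times> ({..<n} - I))"
  proof (rule inj_onI, clarsimp)
    fix x e x' e'
    assume "x \<in> I" "e \<notin> I" "x' \<in> I" "e' \<notin> I" and eq: "insert e (I - {x}) = insert e' (I - {x'})"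
    then have "e = e'" by blast
    moreover have "x \<notin> insert e' (I - {x'})"
      unfolding eq[symmetric] using \<open>x \<in> I\<close> \<open>e \<notin> I\<close> by auto
    then have "x = x'" using \<open>x \<in> I\<close> by auto
    ultimately show "x = x' \<and> e = e'" by simp
  qed
  then have "(\<Sum>J\<in>exchanges I. G J) = (\<Sum>(x, e)\<in>I \<times> ({..<n} - I). G (insert e (I - {x})))"
    unfolding exchanges_def by (subst sum.reindex) (simp_all add: comp_def case_prod_beta)
  then show ?thesis
    by (simp add: sum.cartesian_product)
qed

lemma exchanges_iff:
  assumes I: "I \<in> level k" and "1 \<le> k"
  shows "J \<in> exchanges I \<longleftrightarrow> J \<in> level k \<and> card (I \<inter> J) = k - 1"
proof
  assume "J \<in> exchanges I"
  then obtain x e where xe: "x \<in> I" "e \<in> {..<n} - I" "J = insert e (I - {x})"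
    unfolding exchanges_def by auto
  have "I - {x} \<in> level (k - 1)"
    using remove_in_level[of I "k - 1" x] I xe(1) assms(2) by simp
  then have "J \<in> level k"
    using insert_in_level[of "I - {x}" "k - 1" e] xe assms(2) by simp
  moreover have "I \<inter> J = I - {x}" using xe by auto
  then have "card (I \<inter> J) = k - 1"
    using I xe(1) by (simp add: level_card level_finite)
  ultimately show "J \<in> level k \<and> card (I \<inter> J) = k - 1" by simp
next
  assume J: "J \<in> level k \<and> card (I \<inter> J) = k - 1"
  have "card (I - J) = 1" "card (J - I) = 1"
    using I J assms(2) by (auto simp: card_Diff_subset_Int level_card level_finite Int_commute)
  then obtain x e where "I - J = {x}" "J - I = {e}"
    by (meson card_1_singletonE)
  then have "x \<in> I" "e \<in> {..<n} - I" "J = insert e (I - {x})"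
    using J by (auto dest: level_subset)
  then show "J \<in> exchanges I"
    unfolding exchanges_def by auto
qed

lemma sum_indep_diff_eq_sum_exchanges:
  assumes I: "I \<in> indep k" and "1 \<le> k"
    and P: "\<And>J. J \<in> indep k \<Longrightarrow> J \<noteq> I \<Longrightarrow> P J = (if J \<in> exchanges I then G J else 0)"
    and G: "\<And>J. J \<in> exchanges I \<Longrightarrow> W J = 0 \<Longrightarrow> G J = 0"
  shows "(\<Sum>J\<in>indep k - {I}. P J) = (\<Sum>J\<in>exchanges I. G J)"
proof -
  have I_level: "I \<in> level k" using I by (simp add: indep_iff)
  have "I \<notin> exchanges I"
    using exchanges_iff[OF I_level \<open>1 \<le> k\<close>] level_card[OF I_level] \<open>1 \<le> k\<close> by auto
  have "(\<Sum>J\<in>indep k - {I}. P J) = (\<Sum>J\<in>indep k - {I}. if J \<in> exchanges I then G J else 0)"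
    using P by (intro sum.cong) auto
  also have "\<dots> = (\<Sum>J\<in>exchanges I \<inter> indep k. G J)"
  proof -
    have "exchanges I \<inter> (indep k - {I}) = exchanges I \<inter> indep k"
      using \<open>I \<notin> exchanges I\<close> by auto
    then show ?thesis by (simp add: sum.If_cases Int_commute)
  qed
  also have "\<dots> = (\<Sum>J\<in>exchanges I. G J)"
  proof (rule sum.mono_neutral_left)
    show "finite (exchanges I)"
      unfolding exchanges_def using I_level by (simp add: level_finite)
    show "\<forall>J\<in>exchanges I - exchanges I \<inter> indep k. G J = 0"
      using G exchanges_iff[OF I_level \<open>1 \<le> k\<close>] base_weight_nonneg by (auto simp: indep_iff less_le)
  qed auto
  finally show ?thesis .
qed

lemma down_up_diag:
  assumes k: "1 \<le> k" "k \<le> r" and I: "I \<in> indep k"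
  shows "down_up n r p k I I = (\<Sum>x\<in>I. W I / (real k * real (r - (k - 1)) * W (I - {x})))"
proof -
  have I_level: "I \<in> level k" "finite I" "card I = k"
    using I by (auto simp: indep_iff level_finite level_card)
  have "{I'\<in>indep (k - 1). I' \<subset> I} = (\<lambda>x. I - {x}) ` I"
  proof (intro equalityI subsetI)
    fix I' assume "I' \<in> {I'\<in>indep (k - 1). I' \<subset> I}"
    then have I': "I' \<in> level (k - 1)" "I' \<subset> I" by (auto simp: indep_iff)
    then have "card (I - I') = card I - card I'"
      using I_level by (intro card_Diff_subset) (auto simp: level_finite)
    then have "card (I - I') = 1"
      using I_level k level_card[OF I'(1)] by simp
    then obtain x where "I - I' = {x}" by (meson card_1_singletonE)
    then show "I' \<in> (\<lambda>x. I - {x}) ` I" using I'(2) by blast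
  next
    fix I' assume "I' \<in> (\<lambda>x. I - {x}) ` I"
    then obtain x where "x \<in> I" "I' = I - {x}" by auto
    then show "I' \<in> {I'\<in>indep (k - 1). I' \<subset> I}"
      using remove_in_indep[of I "k - 1" x] I k by auto
  qed
  moreover have "inj_on (\<lambda>x. I - {x}) I" by (auto intro: inj_onI)
  ultimately have "down_up n r p k I I = (\<Sum>x\<in>I. weight n r p I / (real k * weight n r p (I - {x})))"
    unfolding down_up_def by (simp add: sum.reindex)
  also have "\<dots> = (\<Sum>x\<in>I. W I / (real k * real (r - (k - 1)) * W (I - {x})))"
    using I_level k by (intro sum.cong refl weight_ratio) auto
  finally show ?thesis .
qed

lemma down_up_off_diag:
  assumes k: "1 \<le> k" "k \<le> r" and I: "I \<in> indep k" and J: "J \<in> indep k" "J \<noteq> I"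
  shows "down_up n r p k I J
    = (if J \<in> exchanges I then W J / (real k * real (r - (k - 1)) * W (I \<inter> J)) else 0)"
proof -
  have "I \<in> level k" "J \<in> level k" using I J by (auto simp: indep_iff)
  moreover have "weight n r p J / (real k * weight n r p (I \<inter> J))
      = W J / (real k * real (r - (k - 1)) * W (I \<inter> J))" if "card (I \<inter> J) = k - 1"
    using that k calculation(2) by (intro weight_ratio) (auto simp: level_card)
  ultimately show ?thesis
    unfolding down_up_def exchanges_iff[OF \<open>I \<in> level k\<close> k(1)] using J(2) by auto
qed

lemma sup_avg_remove:
  assumes I: "I \<in> level k" and "x \<in> I" "1 \<le> k"
  shows "real (r - (k - 1)) * W (I - {x}) * sup_avg (k - 1) \<phi> (I - {x})
    = W I * \<phi> I + (\<Sum>e\<in>{..<n} - I. W (insert e (I - {x})) * \<phi> (insert e (I - {x})))"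
proof -
  have "I - {x} \<in> level (k - 1)"
    using remove_in_level[of I "k - 1" x] assms by simp
  moreover have "{..<n} - (I - {x}) = insert x ({..<n} - I)"
    using assms level_subset[OF I] by auto
  ultimately show ?thesis
    using sum_insert_eq_sup_avg[of "I - {x}" "k - 1" \<phi>] \<open>x \<in> I\<close> \<open>1 \<le> k\<close>
    by (simp add: insert_absorb)
qed

lemma sum_down_up_off_diag:
  assumes k: "1 \<le> k" "k \<le> r" and I: "I \<in> indep k"
  shows "(\<Sum>J\<in>indep k - {I}. down_up n r p k I J * \<phi> J)
    = (\<Sum>x\<in>I. (\<Sum>e\<in>{..<n} - I. W (insert e (I - {x})) * \<phi> (insert e (I - {x})))
        / (real k * real (r - (k - 1)) * W (I - {x})))"
proof -
  define c where "c = real k * real (r - (k - 1))"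
  have "(\<Sum>J\<in>indep k - {I}. down_up n r p k I J * \<phi> J) = (\<Sum>J\<in>exchanges I. W J * \<phi> J / (c * W (I \<inter> J)))"
    using down_up_off_diag[OF k I] unfolding c_def by (intro sum_indep_diff_eq_sum_exchanges[OF I k(1)]) auto
  also have "\<dots> = (\<Sum>x\<in>I. \<Sum>e\<in>{..<n} - I. W (insert e (I - {x})) * \<phi> (insert e (I - {x})) / (c * W (I - {x})))"
  proof -
    have "I \<inter> (I - {x}) = I - {x}" for x
      by auto
    then show ?thesis
      unfolding sum_exchanges by (intro sum.cong refl) simp
  qed
  finally show ?thesis
    unfolding c_def by (simp add: sum_divide_distrib)
qed

lemma down_up_eq_sub_avg_sup_avg:
  assumes k: "1 \<le> k" "k \<le> r" and I: "I \<in> indep k"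
  shows "(\<Sum>J\<in>indep k. down_up n r p k I J * \<phi> J) = sub_avg (k - 1) (sup_avg (k - 1) \<phi>) I"
proof -
  define c where "c = real k * real (r - (k - 1))"
  have "c > 0" unfolding c_def using k by simp
  have "I \<in> level k" using I by (simp add: indep_iff)
  have W_remove: "W (I - {x}) \<noteq> 0" for x
    using base_weight_antimono[of "I - {x}" I] I by (auto simp: indep_iff)
  have "(\<Sum>J\<in>indep k. down_up n r p k I J * \<phi> J)
      = down_up n r p k I I * \<phi> I + (\<Sum>J\<in>indep k - {I}. down_up n r p k I J * \<phi> J)"
    using I by (simp add: sum.remove)
  also have "\<dots> = (\<Sum>x\<in>I. (W I * \<phi> I + (\<Sum>e\<in>{..<n} - I. W (insert e (I - {x})) * \<phi> (insert e (I - {x}))))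
      / (c * W (I - {x})))"
    unfolding down_up_diag[OF k I] sum_down_up_off_diag[OF k I] c_def
    by (simp add: add_divide_distrib sum.distrib sum_distrib_right)
  also have "\<dots> = (\<Sum>x\<in>I. sup_avg (k - 1) \<phi> (I - {x}) / real k)"
    using W_remove \<open>c > 0\<close> k
    by (intro sum.cong refl) (simp add: sup_avg_remove[OF \<open>I \<in> level k\<close> _ k(1), symmetric] c_def)
  also have "\<dots> = sub_avg (k - 1) (sup_avg (k - 1) \<phi>) I"
    unfolding sub_avg_def using k by (simp add: sum_divide_distrib)
  finally show ?thesis .
qed

lemma union_in_level_iff:
  assumes I: "I \<in> level k" and J: "J \<in> level k" and "1 \<le> k"
  shows "I \<union> J \<in> level (Suc k) \<longleftrightarrow> J \<in> exchanges I"
proof -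
  have "card I + card J = card (I \<union> J) + card (I \<inter> J)"
    using I J by (intro card_Un_Int) (auto simp: level_finite)
  then have "card (I \<union> J) = Suc k \<longleftrightarrow> card (I \<inter> J) = k - 1"
    using I J \<open>1 \<le> k\<close> by (auto simp: level_card)
  then show ?thesis
    unfolding exchanges_iff[OF I \<open>1 \<le> k\<close>] using I J by (auto simp: level_def)
qed

lemma up_down_off_diag:
  assumes k: "1 \<le> k" "k < r" and I: "I \<in> indep k" and J: "J \<in> indep k" "J \<noteq> I"
  shows "up_down n r p k I J
    = (if J \<in> exchanges I then W (I \<union> J) / (real (Suc k) * real (r - k) * W I) else 0)"
proof -
  have "I \<in> level k" "J \<in> level k" using I J by (auto simp: indep_iff)
  then have iff: "I \<union> J \<in> level (Suc k) \<longleftrightarrow> J \<in> exchanges I"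
    using union_in_level_iff k(1) by blast
  have "weight n r p (I \<union> J) / ((real k + 1) * weight n r p I)
      = W (I \<union> J) / (real (Suc k) * real (r - k) * W I)" if "J \<in> exchanges I"
    using iff that k \<open>I \<in> level k\<close> by (subst weight_ratio) (auto simp: level_card)
  then show ?thesis
    unfolding up_down_def using J(2) iff by (auto simp: indep_iff base_weight_nonneg less_le)
qed

lemma sub_avg_insert:
  assumes I: "I \<in> level k" and "e \<notin> I"
  shows "real (Suc k) * sub_avg k \<phi> (insert e I) = \<phi> I + (\<Sum>x\<in>I. \<phi> (insert e (I - {x})))"
proof -
  have "(\<Sum>x\<in>insert e I. \<phi> (insert e I - {x})) = \<phi> (insert e I - {e}) + (\<Sum>x\<in>I. \<phi> (insert e I - {x}))"
    using assms level_finite[OF I] by (simp add: sum.insert)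
  also have "(\<Sum>x\<in>I. \<phi> (insert e I - {x})) = (\<Sum>x\<in>I. \<phi> (insert e (I - {x})))"
    using \<open>e \<notin> I\<close> by (intro sum.cong refl) (metis insert_Diff_if singletonD)
  finally show ?thesis
    unfolding sub_avg_def using \<open>e \<notin> I\<close> by simp
qed

lemma sum_up_down_off_diag:
  assumes k: "1 \<le> k" "k < r" and I: "I \<in> indep k"
  shows "(\<Sum>J\<in>indep k - {I}. up_down n r p k I J * \<phi> J)
    = (\<Sum>e\<in>{..<n} - I. W (insert e I) * (\<Sum>x\<in>I. \<phi> (insert e (I - {x}))))
      / (real (Suc k) * real (r - k) * W I)"
proof -
  define c where "c = real (Suc k) * real (r - k) * W I"
  have "(\<Sum>J\<in>indep k - {I}. up_down n r p k I J * \<phi> J) = (\<Sum>J\<in>exchanges I. W (I \<union> J) * \<phi> J / c)"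
  proof (rule sum_indep_diff_eq_sum_exchanges[OF I k(1)])
    show "W (I \<union> J) * \<phi> J / c = 0" if "W J = 0" for J
      using that base_weight_antimono[of J "I \<union> J"] base_weight_nonneg[of "I \<union> J"] by simp
  qed (simp add: up_down_off_diag[OF k I] c_def)
  also have "\<dots> = (\<Sum>x\<in>I. \<Sum>e\<in>{..<n} - I. W (insert e I) * \<phi> (insert e (I - {x})) / c)"
  proof -
    have "I \<union> insert e (I - {x}) = insert e I" if "x \<in> I" for x e
      using that by auto
    then show ?thesis
      unfolding sum_exchanges by (intro sum.cong refl) simp
  qed
  also have "\<dots> = (\<Sum>e\<in>{..<n} - I. \<Sum>x\<in>I. W (insert e I) * \<phi> (insert e (I - {x})) / c)"
    by (rule sum.swap)
  finally show ?thesis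
    unfolding c_def by (simp add: sum_distrib_left sum_divide_distrib)
qed

lemma up_down_eq_sup_avg_sub_avg:
  assumes k: "1 \<le> k" "k < r" and I: "I \<in> indep k"
  shows "(\<Sum>J\<in>indep k. up_down n r p k I J * \<phi> J) = sup_avg k (sub_avg k \<phi>) I"
proof -
  define c where "c = real (Suc k) * real (r - k) * W I"
  have I_level: "I \<in> level k" "W I > 0" using I by (auto simp: indep_iff)
  have "(\<Sum>e\<in>{..<n} - I. W (insert e I) * (real (Suc k) * sub_avg k \<phi> (insert e I)))
      = real (Suc k) * (\<Sum>e\<in>{..<n} - I. W (insert e I) * sub_avg k \<phi> (insert e I))"
    by (simp add: sum_distrib_left mult_ac)
  then have "sup_avg k (sub_avg k \<phi>) I
      = (\<Sum>e\<in>{..<n} - I. W (insert e I) * (real (Suc k) * sub_avg k \<phi> (insert e I))) / c"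
    unfolding sup_avg_def c_def by simp
  also have "\<dots> = (\<Sum>e\<in>{..<n} - I. W (insert e I) * (\<phi> I + (\<Sum>x\<in>I. \<phi> (insert e (I - {x}))))) / c"
    by (intro arg_cong[where f = "\<lambda>x. x / c"] sum.cong refl, subst sub_avg_insert[OF I_level(1)]) auto
  also have "\<dots> = \<phi> I * (\<Sum>e\<in>{..<n} - I. W (insert e I)) / c
      + (\<Sum>e\<in>{..<n} - I. W (insert e I) * (\<Sum>x\<in>I. \<phi> (insert e (I - {x})))) / c"
    by (simp add: distrib_left sum.distrib sum_distrib_left add_divide_distrib mult_ac)
  also have "\<phi> I * (\<Sum>e\<in>{..<n} - I. W (insert e I)) / c = up_down n r p k I I * \<phi> I"
    using sum_base_weight_insert[OF level_subset[OF I_level(1)]] I_level k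
    unfolding c_def up_down_def by (simp add: level_card)
  also have "(\<Sum>e\<in>{..<n} - I. W (insert e I) * (\<Sum>x\<in>I. \<phi> (insert e (I - {x})))) / c
      = (\<Sum>J\<in>indep k - {I}. up_down n r p k I J * \<phi> J)"
    unfolding sum_up_down_off_diag[OF k I] c_def ..
  also have "up_down n r p k I I * \<phi> I + (\<Sum>J\<in>indep k - {I}. up_down n r p k I J * \<phi> J)
      = (\<Sum>J\<in>indep k. up_down n r p k I J * \<phi> J)"
    using I by (simp add: sum.remove)
  finally show ?thesis ..
qed

lemma pi_k_eq_level_dist: "I \<in> level k \<Longrightarrow> pi_k n r p k I = level_dist k I"
proof -
  assume "I \<in> level k"
  have "(\<Sum>J\<in>indep k. weight n r p J) = (\<Sum>J\<in>indep k. fact (r - k) * W J)"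
    by (intro sum.cong refl) (auto simp: weight_eq indep_iff level_card)
  also have "\<dots> = fact (r - k) * (\<Sum>J\<in>indep k. W J)"
    by (simp add: sum_distrib_left)
  also have "(\<Sum>J\<in>indep k. W J) = level_mass k"
    unfolding level_mass_def using sum_level_dist_indep[of k "\<lambda>_. 1"]
    by (intro sum.mono_neutral_left) (auto simp: indep_iff less_le base_weight_nonneg)
  finally show ?thesis
    unfolding pi_k_def level_dist_def weight_eq using \<open>I \<in> level k\<close> by (simp add: level_card)
qed

lemma sum_pi_k: "(\<Sum>I\<in>indep k. pi_k n r p k I * F I) = (\<Sum>I\<in>level k. level_dist k I * F I)"
  by (simp add: sum_level_dist_indep pi_k_eq_level_dist indep_iff)

lemma entropy_pi_k: "entropy (indep k) (pi_k n r p k) f = ent k f"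
  unfolding entropy_def sum_pi_k by (simp add: mult.assoc)

lemma mlsc_ge_of_level_contraction:
  fixes T :: "(nat set \<Rightarrow> real) \<Rightarrow> nat set \<Rightarrow> real"
  assumes "k \<le> r"
    and kernel: "\<And>\<phi> I. I \<in> indep k \<Longrightarrow> (\<Sum>J\<in>indep k. P I J * \<phi> J) = T \<phi> I"
    and T_one: "\<And>I. I \<in> indep k \<Longrightarrow> T (\<lambda>_. 1) I = 1"
    and T_adjoint: "\<And>\<phi> \<psi>. (\<Sum>I\<in>level k. level_dist k I * \<phi> I * T \<psi> I) = (\<Sum>I\<in>level k. level_dist k I * T \<phi> I * \<psi> I)"
    and T_pos: "\<And>f I. \<forall>J\<in>indep k. f J > 0 \<Longrightarrow> I \<in> indep k \<Longrightarrow> T f I > 0"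
    and T_contraction: "\<And>f. \<forall>J\<in>indep k. f J > 0 \<Longrightarrow> ent k (T f) \<le> c * ent k f"
  shows "mlsc (indep k) (pi_k n r p k) P \<ge> ereal (1 - c)"
proof (rule mlsc_ge_of_entropy_contraction[where T = T])
  show "(\<Sum>I\<in>indep k. pi_k n r p k I) = 1"
    using sum_pi_k[of k "\<lambda>_. 1"] sum_level_dist[OF assms(1)] by simp
  show "(\<Sum>I\<in>indep k. pi_k n r p k I * \<phi> I * T \<psi> I) = (\<Sum>I\<in>indep k. pi_k n r p k I * T \<phi> I * \<psi> I)" for \<phi> \<psi>
    using sum_pi_k[of k "\<lambda>I. \<phi> I * T \<psi> I"] sum_pi_k[of k "\<lambda>I. T \<phi> I * \<psi> I"] T_adjoint
    by (simp add: mult.assoc)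
  show "T f I \<ge> 0" if "\<forall>J\<in>indep k. f J > 0" "I \<in> indep k" for f I
    using T_pos[OF that] by simp
qed (auto simp: pi_k_eq_level_dist level_dist_nonneg indep_iff entropy_pi_k kernel T_one
    intro: less_imp_le T_pos T_contraction)

lemma mlsc_down_up:
  assumes k: "2 \<le> k" "k \<le> r"
  shows "mlsc (indep k) (pi_k n r p k) (down_up n r p k) \<ge> ereal (1 / real k)"
proof -
  define m where "m = k - 1"
  have m: "k = Suc m" "m < r" "1 \<le> m" using k unfolding m_def by auto
  have "mlsc (indep k) (pi_k n r p k) (down_up n r p k) \<ge> ereal (1 - real m / real k)"
  proof (rule mlsc_ge_of_level_contraction[where T = "\<lambda>\<phi>. sub_avg m (sup_avg m \<phi>)"])
    show "(\<Sum>J\<in>indep k. down_up n r p k I J * \<phi> J) = sub_avg m (sup_avg m \<phi>) I" if "I \<in> indep k" for \<phi> I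
      unfolding m_def using down_up_eq_sub_avg_sup_avg that k by simp
    show "sub_avg m (sup_avg m (\<lambda>_. 1)) I = 1" if "I \<in> indep k" for I
    proof -
      have "sub_avg m (sup_avg m (\<lambda>_. 1)) I = sub_avg m (\<lambda>_. 1) I"
        unfolding sub_avg_def using that m remove_in_indep[of I m] by (simp add: sup_avg_const)
      then show ?thesis
        using that m by (simp add: sub_avg_const indep_iff)
    qed
    show "(\<Sum>I\<in>level k. level_dist k I * \<phi> I * sub_avg m (sup_avg m \<psi>) I)
      = (\<Sum>I\<in>level k. level_dist k I * sub_avg m (sup_avg m \<phi>) I * \<psi> I)" for \<phi> \<psi>
      using sub_avg_adjoint[OF m(2), of \<phi> "sup_avg m \<psi>"] sub_avg_adjoint[OF m(2), of \<psi> "sup_avg m \<phi>"]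
      unfolding m(1) by (simp add: mult_ac)
    show "sub_avg m (sup_avg m f) I > 0" if "\<forall>J\<in>indep k. f J > 0" "I \<in> indep k" for f I
      using that m by (auto intro!: sub_avg_pos sup_avg_pos)
    show "ent k (sub_avg m (sup_avg m f)) \<le> real m / real k * ent k f" if f: "\<forall>J\<in>indep k. f J > 0" for f
    proof -
      have "real k * ent m (sup_avg m f) \<le> real m * ent k f"
        using entropy_sup_avg_contraction[of k f] f k unfolding m_def by auto
      then have "ent m (sup_avg m f) \<le> real m / real k * ent k f"
        using k by (simp add: field_simps)
      moreover have "ent k (sub_avg m (sup_avg m f)) \<le> ent m (sup_avg m f)"
        using f m by (simp add: entropy_sub_avg_le sup_avg_pos)
      ultimately show ?thesis by linarith
    qed
  qed (use k in simp)
  moreover have "1 - real m / real k = 1 / real k"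
    using m by (simp add: field_simps)
  ultimately show ?thesis by simp
qed

lemma mlsc_up_down:
  assumes k: "1 \<le> k" "k < r"
  shows "mlsc (indep k) (pi_k n r p k) (up_down n r p k) \<ge> ereal (1 / (real k + 1))"
proof -
  have "mlsc (indep k) (pi_k n r p k) (up_down n r p k) \<ge> ereal (1 - real k / real (Suc k))"
  proof (rule mlsc_ge_of_level_contraction[where T = "\<lambda>\<phi>. sup_avg k (sub_avg k \<phi>)"])
    show "(\<Sum>J\<in>indep k. up_down n r p k I J * \<phi> J) = sup_avg k (sub_avg k \<phi>) I" if "I \<in> indep k" for \<phi> I
      using up_down_eq_sup_avg_sub_avg that k by simp
    show "sup_avg k (sub_avg k (\<lambda>_. 1)) I = 1" if "I \<in> indep k" for I
    proof -
      have "sup_avg k (sub_avg k (\<lambda>_. 1)) I = sup_avg k (\<lambda>_. 1) I"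
        unfolding sup_avg_def using that insert_in_level by (simp add: sub_avg_const indep_iff)
      then show ?thesis
        using that k by (simp add: sup_avg_const)
    qed
    show "(\<Sum>I\<in>level k. level_dist k I * \<phi> I * sup_avg k (sub_avg k \<psi>) I)
      = (\<Sum>I\<in>level k. level_dist k I * sup_avg k (sub_avg k \<phi>) I * \<psi> I)" for \<phi> \<psi>
      using sub_avg_adjoint[OF k(2), of "sub_avg k \<psi>" \<phi>] sub_avg_adjoint[OF k(2), of "sub_avg k \<phi>" \<psi>]
      by (simp add: mult_ac)
    show "sup_avg k (sub_avg k f) I > 0" if "\<forall>J\<in>indep k. f J > 0" "I \<in> indep k" for f I
      using that k by (auto intro!: sub_avg_pos sup_avg_pos)
    show "ent k (sup_avg k (sub_avg k f)) \<le> real k / real (Suc k) * ent k f" if f: "\<forall>J\<in>indep k. f J > 0" for f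
    proof -
      have "real (Suc k) * ent k (sup_avg k (sub_avg k f)) \<le> real k * ent (Suc k) (sub_avg k f)"
        using entropy_sup_avg_contraction[of "Suc k" "sub_avg k f"] f k by (simp add: sub_avg_pos)
      then have "ent k (sup_avg k (sub_avg k f)) \<le> real k / real (Suc k) * ent (Suc k) (sub_avg k f)"
        by (simp add: field_simps)
      also have "\<dots> \<le> real k / real (Suc k) * ent k f"
        using f k by (intro mult_left_mono) (simp_all add: entropy_sub_avg_le)
      finally show ?thesis .
    qed
  qed (use k in simp)
  moreover have "1 - real k / real (Suc k) = 1 / (real k + 1)"
    by (simp add: field_simps)
  ultimately show ?thesis by simp
qed

end

theorem theorem3p1:
  fixes n r :: nat and \<pi> :: "nat set \<Rightarrow> real"
  assumes "distribution n \<pi>"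
    and "r_homogeneous n r \<pi>"
    and "strongly_log_concave_poly n (gen_poly n \<pi>)"
  shows "(\<forall>k. 2 \<le> k \<and> k \<le> r \<longrightarrow>
            mlsc (indep_k n \<pi> k) (pi_k n r \<pi> k) (down_up n r \<pi> k) \<ge> ereal (1 / real k))
       \<and> (\<forall>k. 1 \<le> k \<and> k \<le> r - 1 \<longrightarrow>
            mlsc (indep_k n \<pi> k) (pi_k n r \<pi> k) (up_down n r \<pi> k) \<ge> ereal (1 / (real k + 1)))"
proof -
  have nonneg: "\<And>S. \<pi> S \<ge> 0" and total: "(\<Sum>S\<in>Pow {..<n}. \<pi> S) = 1"
    using assms(1) unfolding distribution_def by auto
  have "\<exists>S\<in>Pow {..<n}. \<pi> S \<noteq> 0"
    using total sum.neutral[of "Pow {..<n}" \<pi>] by (metis zero_neq_one)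
  then have "bases n \<pi> \<noteq> {}"
    unfolding bases_def by auto
  moreover have "\<And>S. \<pi> S \<noteq> 0 \<Longrightarrow> S \<subseteq> {..<n} \<and> card S = r"
    using assms(2) unfolding r_homogeneous_def by auto
  ultimately interpret log_concave_links n r \<pi>
    using nonneg link_hess_quadratic_form_le[OF nonneg assms(3)] by unfold_locales auto
  show ?thesis
    using mlsc_down_up mlsc_up_down by auto
qed

end
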